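(* Fix a prime $p$, $n\in\mathbb{N}$ and $\theta\in\Omega_p$. Let $\Gamma_n=\frac1{p^n}\mathbb{Z}\times\frac1{p^n}\mathbb{Z}$, $\pi_{\theta_{2n}}=\lambda_{(\sigma_\theta)_n}\circ\upsilon_n$, and let $D_{p,n}$ be the multiplication operator by $\mathbb{L}^\Sigma_{p,n}$ on $\ell^2(\Gamma_n)$. Then $(C^*(\mathbb{Z}^2,\sigma_{\theta_{2n}}),\ell^2(\Gamma_n),D_{p,n})$ with representation $\pi_{\theta_{2n}}$ is a spectral triple for the noncommutative torus $C^*(\mathbb{Z}^2,\sigma_{\theta_{2n}})$, with associated smooth subalgebra $C_C(\mathbb{Z}^2,\sigma_{\theta_{2n}})$.
   Context: $\Omega_p$: sequences $(\theta_m)_{m\ge0}$ in $[0,1)$ with $p\theta_m\equiv\theta_{m-1}\bmod\mathbb{Z}$ for $m\ge1$. For $\vartheta\in[0,1]$, $\sigma_\vartheta$ on $\mathbb{Z}^2$ is $\sigma_\vartheta(z,y)=\exp(\pi i\vartheta(z_1y_2-z_2y_1))$. On $\mathbb{Z}[\tfrac1p]\times\mathbb{Z}[\tfrac1p]$, $\sigma_\theta((\tfrac{q_1}{p^{k_1}},\tfrac{q_2}{p^{k_2}}),(\tfrac{q_3}{p^{k_3}},\tfrac{q_4}{p^{k_4}}))=\exp(2\pi i\theta_{k_1+k_4}q_1q_4)$, and $(\sigma_\theta)_n$ is its restriction to the subgroup $\Gamma_n$. For a multiplier $\sigma$ on a discrete group $G$: $C^*(G,\sigma)$ is the enveloping $C^*$-algebra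 of $\ell^1(G,\sigma)$ (twisted convolution $(f_1*_\sigma f_2)(\gamma)=\sum_{\gamma_1}f_1(\gamma_1)f_2(\gamma_1^{-1}\gamma)\sigma(\gamma_1,\gamma_1^{-1}\gamma)$); $C_C(G,\sigma)$ = finitely supported functions; $\lambda_\sigma$ = left-$\sigma$ regular representation on $\ell^2(G)$, $(\lambda_\sigma(f)g)(\gamma)=\sum_{\gamma_1}\sigma(\gamma_1,\gamma_1^{-1}\gamma)f(\gamma_1)g(\gamma_1^{-1}\gamma)$. $\upsilon_n:C^*(\mathbb{Z}^2,\sigma_{\theta_{2n}})\to C^*(\Gamma_n,(\sigma_\theta)_n)$ is the $*$-isomorphism sending the canonical unitaries $\delta_{(1,0)},\delta_{(0,1)}$ to $\delta_{(1/p^n,0)},\delta_{(0,1/p^n)}$ (both algebras are universal for unitaries $U,V$ with $UV=e^{2\pi i\theta_{2n}}VU$). $\mathbb{L}_p(r)=|r|+\|r\|_p$ ($p$-adic norm), $\mathbb{L}_{p,n}$ its restriction to $\frac1{p^n}\mathbb{Z}$, $\mathbb{L}^\Sigma_{p,n}(\gamma_1,\gamma_2)=\mathbb{L}_{p,n}(\gamma_1)+\mathbb{L}_{p,n}(\gamma_2)$. A spectral triple $(A,H,D)$: unital $C^*$-algebra $A$ with unital faithful representation $\pi$ on $H$, self-adjoint $D$ with compact resolvent, and a dense $*$-subalgebra $\mathcal{A}$ such that $[D,\pi(a)]$ is densely defined and extends to a bounded operator for every $a\in\mathcal{A}$. *)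

theory Defs
  imports "HOL-Analysis.Analysis" "HOL-Library.Product_Plus" "HOL-Computational_Algebra.Primes"
begin

definition Omega :: "nat \<Rightarrow> (nat \<Rightarrow> real) set" where
  "Omega p = {\<theta>. (\<forall>m. 0 \<le> \<theta> m \<and> \<theta> m < 1) \<and>
                  (\<forall>m\<ge>1. of_nat p * \<theta> m - \<theta> (m - 1) \<in> \<int>)}"

definition CC :: "('g \<Rightarrow> complex) set" where
  "CC = {f. finite {\<gamma>. f \<gamma> \<noteq> 0}}"

definition delta :: "'g \<Rightarrow> 'g \<Rightarrow> complex" where
  "delta g = (\<lambda>\<gamma>. if \<gamma> = g then 1 else 0)"

text \<open>Twisted convolution (group written additively, so gamma1^-1 gamma = gamma - gamma1).\<close>
definition twconv :: "('g::ab_group_add \<Rightarrow> 'g \<Rightarrow> complex) \<Rightarrow> ('g \<Rightarrow> complex) \<Rightarrow> ('g \<Rightarrow> complex) \<Rightarrow> 'g \<Rightarrow> complex" where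
  "twconv \<sigma> f1 f2 \<gamma> = (\<Sum>\<gamma>1\<in>{\<gamma>1. f1 \<gamma>1 \<noteq> 0}. f1 \<gamma>1 * f2 (\<gamma> - \<gamma>1) * \<sigma> \<gamma>1 (\<gamma> - \<gamma>1))"

definition twinv :: "('g::ab_group_add \<Rightarrow> 'g \<Rightarrow> complex) \<Rightarrow> ('g \<Rightarrow> complex) \<Rightarrow> 'g \<Rightarrow> complex" where
  "twinv \<sigma> f \<gamma> = cnj (\<sigma> (- \<gamma>) \<gamma>) * cnj (f (- \<gamma>))"

text \<open>Left sigma-regular representation (applied to finitely supported f).\<close>
definition lambda_tw :: "('g::ab_group_add \<Rightarrow> 'g \<Rightarrow> complex) \<Rightarrow> ('g \<Rightarrow> complex) \<Rightarrow> ('g \<Rightarrow> complex) \<Rightarrow> 'g \<Rightarrow> complex" where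
  "lambda_tw \<sigma> f g \<gamma> = (\<Sum>\<gamma>1\<in>{\<gamma>1. f \<gamma>1 \<noteq> 0}. \<sigma> \<gamma>1 (\<gamma> - \<gamma>1) * f \<gamma>1 * g (\<gamma> - \<gamma>1))"

definition l2 :: "'x set \<Rightarrow> ('x \<Rightarrow> complex) set" where
  "l2 X = {g. (\<forall>x. x \<notin> X \<longrightarrow> g x = 0) \<and> (\<lambda>x. (cmod (g x))\<^sup>2) summable_on X}"

definition l2norm :: "('x \<Rightarrow> complex) \<Rightarrow> real" where
  "l2norm g = sqrt (\<Sum>\<^sub>\<infinity>x. (cmod (g x))\<^sup>2)"

definition l2inner :: "('x \<Rightarrow> complex) \<Rightarrow> ('x \<Rightarrow> complex) \<Rightarrow> complex" where
  "l2inner g h = (\<Sum>\<^sub>\<infinity>x. g x * cnj (h x))"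

definition bounded_op :: "'x set \<Rightarrow> (('x \<Rightarrow> complex) \<Rightarrow> ('x \<Rightarrow> complex)) \<Rightarrow> bool" where
  "bounded_op X T \<longleftrightarrow>
     (\<forall>g\<in>l2 X. T g \<in> l2 X) \<and>
     (\<forall>g\<in>l2 X. \<forall>h\<in>l2 X. T (\<lambda>x. g x + h x) = (\<lambda>x. T g x + T h x)) \<and>
     (\<forall>g\<in>l2 X. \<forall>c. T (\<lambda>x. c * g x) = (\<lambda>x. c * T g x)) \<and>
     (\<exists>C. \<forall>g\<in>l2 X. l2norm (T g) \<le> C * l2norm g)"

definition opnorm :: "'x set \<Rightarrow> (('x \<Rightarrow> complex) \<Rightarrow> ('x \<Rightarrow> complex)) \<Rightarrow> real" where
  "opnorm X T = Sup {l2norm (T g) | g. g \<in> l2 X \<and> l2norm g \<le> 1}"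

definition compact_op :: "'x set \<Rightarrow> (('x \<Rightarrow> complex) \<Rightarrow> ('x \<Rightarrow> complex)) \<Rightarrow> bool" where
  "compact_op X T \<longleftrightarrow>
     (\<forall>\<epsilon>>0. \<exists>F. finite F \<and> F \<subseteq> l2 X \<and>
        (\<forall>g\<in>l2 X. l2norm g \<le> 1 \<longrightarrow> (\<exists>h\<in>F. l2norm (\<lambda>x. T g x - h x) < \<epsilon>)))"

definition dense_in_l2 :: "'x set \<Rightarrow> ('x \<Rightarrow> complex) set \<Rightarrow> bool" where
  "dense_in_l2 X S \<longleftrightarrow> S \<subseteq> l2 X \<and>
     (\<forall>h\<in>l2 X. \<forall>\<epsilon>>0. \<exists>g\<in>S. l2norm (\<lambda>x. h x - g x) < \<epsilon>)"

definition selfadjoint :: "'x set \<Rightarrow> ('x \<Rightarrow> complex) set \<Rightarrow> (('x \<Rightarrow> complex) \<Rightarrow> ('x \<Rightarrow> complex)) \<Rightarrow> bool" where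
  "selfadjoint X Ddom D \<longleftrightarrow>
     dense_in_l2 X Ddom \<and>
     (\<forall>g\<in>Ddom. D g \<in> l2 X) \<and>
     (\<forall>g\<in>Ddom. \<forall>h\<in>Ddom. (\<lambda>x. g x + h x) \<in> Ddom \<and> D (\<lambda>x. g x + h x) = (\<lambda>x. D g x + D h x)) \<and>
     (\<forall>g\<in>Ddom. \<forall>c. (\<lambda>x. c * g x) \<in> Ddom \<and> D (\<lambda>x. c * g x) = (\<lambda>x. c * D g x)) \<and>
     (\<forall>h\<in>l2 X. (\<exists>k\<in>l2 X. \<forall>g\<in>Ddom. l2inner (D g) h = l2inner g k) \<longleftrightarrow> h \<in> Ddom) \<and>
     (\<forall>g\<in>Ddom. \<forall>h\<in>Ddom. l2inner (D g) h = l2inner g (D h))"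

definition compact_resolvent :: "'x set \<Rightarrow> ('x \<Rightarrow> complex) set \<Rightarrow> (('x \<Rightarrow> complex) \<Rightarrow> ('x \<Rightarrow> complex)) \<Rightarrow> bool" where
  "compact_resolvent X Ddom D \<longleftrightarrow>
     (\<exists>R. bounded_op X R \<and>
          (\<forall>g\<in>l2 X. R g \<in> Ddom \<and> (\<lambda>x. D (R g) x - \<i> * R g x) = g) \<and>
          (\<forall>g\<in>Ddom. R (\<lambda>x. D g x - \<i> * g x) = g) \<and>
          compact_op X R)"

definition star_rep :: "('g::ab_group_add \<Rightarrow> 'g \<Rightarrow> complex) \<Rightarrow> 'x set \<Rightarrow>
      (('g \<Rightarrow> complex) \<Rightarrow> ('x \<Rightarrow> complex) \<Rightarrow> ('x \<Rightarrow> complex)) \<Rightarrow> bool" where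
  "star_rep \<sigma> X \<rho> \<longleftrightarrow>
     (\<forall>f\<in>CC. bounded_op X (\<rho> f)) \<and>
     (\<forall>f\<in>CC. \<forall>f'\<in>CC. \<forall>h\<in>l2 X. \<rho> (\<lambda>\<gamma>. f \<gamma> + f' \<gamma>) h = (\<lambda>x. \<rho> f h x + \<rho> f' h x)) \<and>
     (\<forall>f\<in>CC. \<forall>c. \<forall>h\<in>l2 X. \<rho> (\<lambda>\<gamma>. c * f \<gamma>) h = (\<lambda>x. c * \<rho> f h x)) \<and>
     (\<forall>f\<in>CC. \<forall>f'\<in>CC. \<forall>h\<in>l2 X. \<rho> (twconv \<sigma> f f') h = \<rho> f (\<rho> f' h)) \<and>
     (\<forall>f\<in>CC. \<forall>h\<in>l2 X. \<forall>k\<in>l2 X. l2inner (\<rho> (twinv \<sigma> f) h) k = l2inner h (\<rho> f k)) \<and>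
     (\<forall>h\<in>l2 X. \<rho> (delta 0) h = h)"

text \<open>Norm of the enveloping C*-algebra C^*(G,sigma) on C_C(G,sigma): supremum of operator
  norms over all unital *-representations on the separable Hilbert space l2(nat).\<close>
definition univ_norm :: "('g::ab_group_add \<Rightarrow> 'g \<Rightarrow> complex) \<Rightarrow> ('g \<Rightarrow> complex) \<Rightarrow> real" where
  "univ_norm \<sigma> f = Sup {opnorm (UNIV :: nat set) (\<rho> f) | \<rho>. star_rep \<sigma> (UNIV :: nat set) \<rho>}"

definition spectral_triple_tw :: "('g::ab_group_add \<Rightarrow> 'g \<Rightarrow> complex) \<Rightarrow> 'x set \<Rightarrow>
      (('g \<Rightarrow> complex) \<Rightarrow> ('x \<Rightarrow> complex) \<Rightarrow> ('x \<Rightarrow> complex)) \<Rightarrow>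
      ('x \<Rightarrow> complex) set \<Rightarrow> (('x \<Rightarrow> complex) \<Rightarrow> ('x \<Rightarrow> complex)) \<Rightarrow> bool" where
  "spectral_triple_tw \<sigma> X \<pi> Ddom D \<longleftrightarrow>
     star_rep \<sigma> X \<pi> \<and>
     (\<forall>f\<in>CC. opnorm X (\<pi> f) = univ_norm \<sigma> f) \<and>
     selfadjoint X Ddom D \<and>
     compact_resolvent X Ddom D \<and>
     (\<forall>f\<in>CC.
        dense_in_l2 X {g\<in>Ddom. \<pi> f g \<in> Ddom} \<and>
        (\<exists>C. \<forall>g\<in>{g\<in>Ddom. \<pi> f g \<in> Ddom}.
              l2norm (\<lambda>x. D (\<pi> f g) x - \<pi> f (D g) x) \<le> C * l2norm g))"

definition sigma_Z2 :: "real \<Rightarrow> int \<times> int \<Rightarrow> int \<times> int \<Rightarrow> complex" where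
  "sigma_Z2 t z y = cis (pi * t * of_int (fst z * snd y - snd z * fst y))"

definition Gamma_n :: "nat \<Rightarrow> nat \<Rightarrow> (rat \<times> rat) set" where
  "Gamma_n p n = {(of_int a / of_nat p ^ n, of_int b / of_nat p ^ n) | a b. True}"

text \<open>(sigma_theta)_n: restriction of sigma_theta to Gamma_n, using the representations
  q/p^n (k1 = k4 = n) of the coordinates.\<close>
definition sigma_n :: "nat \<Rightarrow> (nat \<Rightarrow> real) \<Rightarrow> nat \<Rightarrow> rat \<times> rat \<Rightarrow> rat \<times> rat \<Rightarrow> complex" where
  "sigma_n p \<theta> n x y =
     cis (2 * pi * \<theta> (2 * n) * of_rat (fst x * of_nat p ^ n) * of_rat (snd y * of_nat p ^ n))"

text \<open>upsilon_n on C_C: the *-isomorphism with delta_(1,0) -> delta_(1/p^n,0),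
  delta_(0,1) -> delta_(0,1/p^n); explicitly delta_(a,b) -> exp(pi i theta_2n a b) delta_(a/p^n,b/p^n).\<close>
definition upsilon :: "nat \<Rightarrow> (nat \<Rightarrow> real) \<Rightarrow> nat \<Rightarrow> (int \<times> int \<Rightarrow> complex) \<Rightarrow> rat \<times> rat \<Rightarrow> complex" where
  "upsilon p \<theta> n f x =
     (if x \<in> Gamma_n p n then
        cis (pi * \<theta> (2 * n) * of_rat (fst x * of_nat p ^ n) * of_rat (snd x * of_nat p ^ n)) *
        f (\<lfloor>fst x * of_nat p ^ n\<rfloor>, \<lfloor>snd x * of_nat p ^ n\<rfloor>)
      else 0)"

definition pi_theta :: "nat \<Rightarrow> (nat \<Rightarrow> real) \<Rightarrow> nat \<Rightarrow> (int \<times> int \<Rightarrow> complex) \<Rightarrow>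
      (rat \<times> rat \<Rightarrow> complex) \<Rightarrow> rat \<times> rat \<Rightarrow> complex" where
  "pi_theta p \<theta> n f = lambda_tw (sigma_n p \<theta> n) (upsilon p \<theta> n f)"

definition padic_abs :: "nat \<Rightarrow> rat \<Rightarrow> real" where
  "padic_abs p r = (if r = 0 then 0 else
     (case quotient_of r of (a, b) \<Rightarrow>
        real p powr (- (real (multiplicity (int p) a) - real (multiplicity (int p) b)))))"

definition Lp :: "nat \<Rightarrow> rat \<Rightarrow> real" where
  "Lp p r = \<bar>of_rat r\<bar> + padic_abs p r"

definition LSigma :: "nat \<Rightarrow> rat \<times> rat \<Rightarrow> real" where
  "LSigma p \<gamma> = Lp p (fst \<gamma>) + Lp p (snd \<gamma>)"

definition mult_dom :: "'x set \<Rightarrow> ('x \<Rightarrow> real) \<Rightarrow> ('x \<Rightarrow> complex) set" where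
  "mult_dom X L = {g \<in> l2 X. (\<lambda>x. complex_of_real (L x) * g x) \<in> l2 X}"

definition mult_op :: "('x \<Rightarrow> real) \<Rightarrow> ('x \<Rightarrow> complex) \<Rightarrow> 'x \<Rightarrow> complex" where
  "mult_op L g = (\<lambda>x. complex_of_real (L x) * g x)"

end

theory Submission
  imports Defs "HOL-Real_Asymp.Real_Asymp"
begin

text \<open>
  The representation \<open>\<pi>\<^sub>\<theta>\<^sub>2\<^sub>n = \<lambda> \<circ> \<upsilon>\<^sub>n\<close> sends \<open>\<delta>\<^sub>z\<close> to a unitary \<open>U\<^sub>z\<close> of \<open>\<ell>\<^sup>2(\<Gamma>\<^sub>n)\<close>, translation by
  \<open>z / p\<^sup>n\<close> twisted by a phase, so \<open>\<pi>(f) = \<Sum>\<^sub>z f(z) U\<^sub>z\<close> is a finite sum and the \<open>U\<^sub>z\<close> satisfy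
  the relations of \<open>C\<^sup>*(\<int>\<^sup>2, \<sigma>\<^sub>\<theta>\<^sub>2\<^sub>n)\<close>.

  Its norm is the universal one because \<open>\<int>\<^sup>2\<close> is amenable. Given any representation \<open>\<rho>\<close> on
  \<open>\<ell>\<^sup>2(\<nat>)\<close>, a vector \<open>\<xi>\<close> and a box \<open>F \<subseteq> \<int>\<^sup>2\<close>, put \<open>c\<^sub>k(z/p\<^sup>n) = e\<^sup>\<pi>\<^sup>i\<^sup>\<theta>\<^sup>z\<^sup>1\<^sup>z\<^sup>2 (\<rho>(\<delta>\<^sub>-\<^sub>z)\<xi>)(k)\<close> for
  \<open>z \<in> F\<close> (the Folner vectors). On every \<open>y\<close> of a smaller box \<open>F'\<close> with \<open>F' - supp f \<subseteq> F\<close> the vector \<open>\<pi>(f) c\<^sub>k\<close> equals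
  \<open>(\<rho>(\<delta>\<^sub>-\<^sub>y) \<rho>(f) \<xi>)(k)\<close> up to a phase, and summing over \<open>k\<close> gives
  \<open>|F'| \<parallel>\<rho>(f)\<xi>\<parallel>\<^sup>2 \<le> \<parallel>\<pi>(f)\<parallel>\<^sup>2 |F| \<parallel>\<xi>\<parallel>\<^sup>2\<close>; for concentric boxes \<open>|F'| / |F| \<rightarrow> 1\<close>.

  \<open>D\<close> is the multiplication by \<open>L\<^sup>\<Sigma>\<close>, self-adjoint on its maximal domain. The sublevel sets of
  \<open>L\<^sup>\<Sigma>\<close> on \<open>\<Gamma>\<^sub>n\<close> are finite, so \<open>(D - i)\<^sup>-\<^sup>1\<close> is compact: off the finite set
  \<open>{L\<^sup>\<Sigma> \<le> M}\<close> it has norm at most \<open>1 / M\<close>, and on that set it ranges over a bounded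
  finite-dimensional space.
  Finally \<open>[D, U\<^sub>z]\<close> is \<open>U\<^sub>z\<close> followed by multiplication with \<open>L\<^sup>\<Sigma>(x) - L\<^sup>\<Sigma>(x - z/p\<^sup>n)\<close>, which is
  bounded: the Archimedean part of \<open>L\<close> is 1-Lipschitz and the \<open>p\<close>-adic part is at most \<open>p\<^sup>n\<close>
  on \<open>\<Gamma>\<^sub>n\<close>.
\<close>

section \<open>Square-summable functions\<close>

definition sqnorm :: "('x \<Rightarrow> complex) \<Rightarrow> real" where
  "sqnorm g = (\<Sum>\<^sub>\<infinity>x. (cmod (g x))\<^sup>2)"

lemma sqnorm_nonneg: "sqnorm g \<ge> 0"
  unfolding sqnorm_def by (rule infsum_nonneg) simp

lemma l2norm_eq_sqrt_sqnorm: "l2norm g = sqrt (sqnorm g)"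
  unfolding l2norm_def sqnorm_def ..

lemma l2norm_nonneg: "l2norm g \<ge> 0"
  by (simp add: l2norm_eq_sqrt_sqnorm sqnorm_nonneg)

lemma l2norm_power2: "(l2norm g)\<^sup>2 = sqnorm g"
  by (simp add: l2norm_eq_sqrt_sqnorm sqnorm_nonneg)

lemma l2_iff: "g \<in> l2 X \<longleftrightarrow> (\<forall>x. x \<notin> X \<longrightarrow> g x = 0) \<and> (\<lambda>x. (cmod (g x))\<^sup>2) summable_on UNIV"
proof -
  have "(\<forall>x. x \<notin> X \<longrightarrow> g x = 0) \<Longrightarrow>
      (\<lambda>x. (cmod (g x))\<^sup>2) summable_on X \<longleftrightarrow> (\<lambda>x. (cmod (g x))\<^sup>2) summable_on UNIV"
    by (rule summable_on_cong_neutral) auto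
  then show ?thesis unfolding l2_def by auto
qed

lemma l2_summable: "g \<in> l2 X \<Longrightarrow> (\<lambda>x. (cmod (g x))\<^sup>2) summable_on UNIV"
  and l2_outside: "g \<in> l2 X \<Longrightarrow> x \<notin> X \<Longrightarrow> g x = 0"
  by (auto simp: l2_iff)

lemma has_sum_sqnorm: "g \<in> l2 X \<Longrightarrow> ((\<lambda>x. (cmod (g x))\<^sup>2) has_sum sqnorm g) UNIV"
  unfolding sqnorm_def by (rule has_sum_infsum[OF l2_summable])

lemma l2I: "(\<lambda>x. (cmod (g x))\<^sup>2) summable_on UNIV \<Longrightarrow> (\<And>x. x \<notin> X \<Longrightarrow> g x = 0) \<Longrightarrow> g \<in> l2 X"
  by (auto simp: l2_iff)

lemma l2_UNIV: "g \<in> l2 X \<Longrightarrow> g \<in> l2 UNIV"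
  by (simp add: l2_iff)

lemma l2_dominated:
  assumes "v \<in> l2 X" "\<And>x. cmod (u x) \<le> K * cmod (v x)"
  shows "u \<in> l2 X" "sqnorm u \<le> K\<^sup>2 * sqnorm v"
proof -
  have le: "(cmod (u x))\<^sup>2 \<le> K\<^sup>2 * (cmod (v x))\<^sup>2" for x
  proof -
    have "cmod (u x) \<le> \<bar>K\<bar> * cmod (v x)"
      using assms(2)[of x] mult_right_mono[OF abs_ge_self norm_ge_zero, of K "v x"] by linarith
    then have "(cmod (u x))\<^sup>2 \<le> (\<bar>K\<bar> * cmod (v x))\<^sup>2"
      by (intro power_mono) auto
    then show ?thesis by (simp add: power_mult_distrib)
  qed
  have sv: "(\<lambda>x. K\<^sup>2 * (cmod (v x))\<^sup>2) summable_on UNIV"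
    using l2_summable[OF assms(1)] by (rule summable_on_cmult_right)
  have su: "(\<lambda>x. (cmod (u x))\<^sup>2) summable_on UNIV"
    by (rule summable_on_comparison_test[OF sv]) (use le in auto)
  moreover have "u x = 0" if "x \<notin> X" for x
    using assms(2)[of x] l2_outside[OF assms(1) that] by simp
  ultimately show "u \<in> l2 X" by (rule l2I)
  have "sqnorm u \<le> (\<Sum>\<^sub>\<infinity>x. K\<^sup>2 * (cmod (v x))\<^sup>2)"
    unfolding sqnorm_def using su sv le by (intro infsum_mono)
  also have "\<dots> = K\<^sup>2 * sqnorm v"
    unfolding sqnorm_def by (rule infsum_cmult_right')
  finally show "sqnorm u \<le> K\<^sup>2 * sqnorm v" .
qed

lemma l2norm_dominated:
  assumes "v \<in> l2 X" "\<And>x. cmod (u x) \<le> K * cmod (v x)" "K \<ge> 0"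
  shows "l2norm u \<le> K * l2norm v"
proof -
  have "sqrt (sqnorm u) \<le> sqrt (K\<^sup>2 * sqnorm v)"
    using l2_dominated(2)[OF assms(1,2)] by simp
  also have "\<dots> = K * sqrt (sqnorm v)"
    using assms(3) by (simp add: real_sqrt_mult)
  finally show ?thesis by (simp add: l2norm_eq_sqrt_sqnorm)
qed

lemma l2_zero [simp]: "(\<lambda>x. 0) \<in> l2 X"
  by (simp add: l2_iff)

lemma l2norm_zero [simp]: "l2norm (\<lambda>x. 0) = 0"
  by (simp add: l2norm_def)

lemma l2_cmult: "g \<in> l2 X \<Longrightarrow> (\<lambda>x. c * g x) \<in> l2 X"
  by (rule l2_dominated(1)[of g X _ "cmod c"]) (simp_all add: norm_mult)

lemma l2_add:
  assumes "g \<in> l2 X" "h \<in> l2 X"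
  shows "(\<lambda>x. g x + h x) \<in> l2 X"
proof (rule l2I)
  have s: "(\<lambda>x. 2 * ((cmod (g x))\<^sup>2 + (cmod (h x))\<^sup>2)) summable_on UNIV"
    using l2_summable[OF assms(1)] l2_summable[OF assms(2)]
    by (intro summable_on_cmult_right summable_on_add)
  have "(cmod (g x + h x))\<^sup>2 \<le> 2 * ((cmod (g x))\<^sup>2 + (cmod (h x))\<^sup>2)" for x
  proof -
    have "(cmod (g x + h x))\<^sup>2 \<le> (cmod (g x) + cmod (h x))\<^sup>2"
      by (intro power_mono norm_triangle_ineq) auto
    also have "\<dots> \<le> 2 * ((cmod (g x))\<^sup>2 + (cmod (h x))\<^sup>2)"
      using sum_squares_bound[of "cmod (g x)" "cmod (h x)"] by (simp add: power2_sum)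
    finally show ?thesis .
  qed
  then show "(\<lambda>x. (cmod (g x + h x))\<^sup>2) summable_on UNIV"
    by (intro summable_on_comparison_test[OF s]) auto
qed (use assms in \<open>simp add: l2_outside\<close>)

lemma l2_sum: "finite S \<Longrightarrow> (\<And>i. i \<in> S \<Longrightarrow> F i \<in> l2 X) \<Longrightarrow> (\<lambda>x. \<Sum>i\<in>S. F i x) \<in> l2 X"
  by (induction S rule: finite_induct) (auto intro: l2_add)

lemma
  fixes f :: "'a \<Rightarrow> 'b::{comm_monoid_add,t2_space}"
  assumes "finite F" "\<And>x. x \<notin> F \<Longrightarrow> f x = 0"
  shows summable_on_UNIV_finite_support: "f summable_on UNIV"
    and infsum_UNIV_finite_support: "infsum f UNIV = sum f F"
proof -
  have "f summable_on UNIV \<longleftrightarrow> f summable_on F"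
    by (rule summable_on_cong_neutral) (use assms(2) in auto)
  then show "f summable_on UNIV" using assms(1) by simp
  have "infsum f UNIV = infsum f F"
    by (rule infsum_cong_neutral) (use assms(2) in auto)
  then show "infsum f UNIV = sum f F" using assms(1) by simp
qed

lemma l2_finite_support:
  assumes "finite F" "F \<subseteq> X" "\<And>x. x \<notin> F \<Longrightarrow> g x = 0"
  shows "g \<in> l2 X"
  by (rule l2I, rule summable_on_UNIV_finite_support[OF assms(1)]) (use assms in auto)

lemma sqnorm_finite_support:
  assumes "finite F" "\<And>x. x \<notin> F \<Longrightarrow> g x = 0"
  shows "sqnorm g = (\<Sum>x\<in>F. (cmod (g x))\<^sup>2)"
  unfolding sqnorm_def by (rule infsum_UNIV_finite_support[OF assms(1)]) (use assms(2) in auto)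

lemma sqnorm_cmult: "sqnorm (\<lambda>x. c * g x) = (cmod c)\<^sup>2 * sqnorm g"
  unfolding sqnorm_def by (simp add: norm_mult power_mult_distrib infsum_cmult_right')

lemma l2norm_cmult: "l2norm (\<lambda>x. c * g x) = cmod c * l2norm g"
  by (simp add: l2norm_eq_sqrt_sqnorm sqnorm_cmult real_sqrt_mult)

lemma sqnorm_eq_0D:
  assumes "g \<in> l2 X" "sqnorm g = 0"
  shows "g = (\<lambda>x. 0)"
proof
  fix x
  have "(cmod (g x))\<^sup>2 = 0"
    using assms l2_summable[OF assms(1)] unfolding sqnorm_def
    by (intro nonneg_infsum_le_0D[of "\<lambda>x. (cmod (g x))\<^sup>2" UNIV]) auto
  then show "g x = 0" by simp
qed

lemma L2_set_le_l2norm: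
  assumes "g \<in> l2 X" "finite F"
  shows "L2_set (\<lambda>x. cmod (g x)) F \<le> l2norm g"
  unfolding L2_set_def l2norm_eq_sqrt_sqnorm sqnorm_def
  by (intro real_sqrt_le_mono finite_sum_le_infsum l2_summable[OF assms(1)] assms(2)) auto

lemma norm_le_l2norm: "g \<in> l2 X \<Longrightarrow> cmod (g x) \<le> l2norm g"
  using L2_set_le_l2norm[of g X "{x}"] by simp

lemma l2norm_triangle:
  assumes "g \<in> l2 X" "h \<in> l2 X"
  shows "l2norm (\<lambda>x. g x + h x) \<le> l2norm g + l2norm h"
proof -
  have "sqnorm (\<lambda>x. g x + h x) \<le> (l2norm g + l2norm h)\<^sup>2"
    unfolding sqnorm_def
  proof (rule infsum_le_finite_sums)
    show "(\<lambda>x. (cmod (g x + h x))\<^sup>2) summable_on UNIV"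
      by (rule l2_summable[OF l2_add[OF assms]])
  next
    fix F :: "'a set" assume F: "finite F"
    have "L2_set (\<lambda>x. cmod (g x + h x)) F \<le> L2_set (\<lambda>x. cmod (g x) + cmod (h x)) F"
      by (intro L2_set_mono norm_triangle_ineq) auto
    also have "\<dots> \<le> L2_set (\<lambda>x. cmod (g x)) F + L2_set (\<lambda>x. cmod (h x)) F"
      by (rule L2_set_triangle_ineq)
    also have "\<dots> \<le> l2norm g + l2norm h"
      by (intro add_mono L2_set_le_l2norm[OF assms(1) F] L2_set_le_l2norm[OF assms(2) F])
    finally have "(L2_set (\<lambda>x. cmod (g x + h x)) F)\<^sup>2 \<le> (l2norm g + l2norm h)\<^sup>2"
      by (intro power_mono) auto
    then show "(\<Sum>x\<in>F. (cmod (g x + h x))\<^sup>2) \<le> (l2norm g + l2norm h)\<^sup>2"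
      by (simp add: L2_set_def sum_nonneg)
  qed
  then have "sqrt (sqnorm (\<lambda>x. g x + h x)) \<le> sqrt ((l2norm g + l2norm h)\<^sup>2)"
    by (rule real_sqrt_le_mono)
  then show ?thesis
    using l2norm_nonneg[of g] l2norm_nonneg[of h] by (simp add: l2norm_eq_sqrt_sqnorm)
qed

lemma l2norm_sum:
  "finite S \<Longrightarrow> (\<And>i. i \<in> S \<Longrightarrow> F i \<in> l2 X) \<Longrightarrow>
    l2norm (\<lambda>x. \<Sum>i\<in>S. F i x) \<le> (\<Sum>i\<in>S. l2norm (F i))"
proof (induction S rule: finite_induct)
  case (insert a S)
  have "l2norm (\<lambda>x. \<Sum>i\<in>insert a S. F i x) = l2norm (\<lambda>x. F a x + (\<Sum>i\<in>S. F i x))"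
    using insert by simp
  also have "\<dots> \<le> l2norm (F a) + l2norm (\<lambda>x. \<Sum>i\<in>S. F i x)"
    using insert by (intro l2norm_triangle l2_sum) auto
  also have "\<dots> \<le> l2norm (F a) + (\<Sum>i\<in>S. l2norm (F i))"
    using insert by simp
  finally show ?case using insert by simp
qed simp

lemma summable_l2inner:
  assumes "g \<in> l2 X" "h \<in> l2 X"
  shows "(\<lambda>x. g x * cnj (h x)) summable_on UNIV"
proof -
  have s: "(\<lambda>x. (cmod (g x))\<^sup>2 + (cmod (h x))\<^sup>2) summable_on UNIV"
    using l2_summable[OF assms(1)] l2_summable[OF assms(2)] by (rule summable_on_add)
  have "cmod (g x) * cmod (h x) \<le> (cmod (g x))\<^sup>2 + (cmod (h x))\<^sup>2" for x
  proof -
    have "0 \<le> cmod (g x) * cmod (h x)" by simp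
    then show ?thesis
      using sum_squares_bound[of "cmod (g x)" "cmod (h x)"] by (simp only: mult.assoc)
  qed
  then have "(\<lambda>x. norm (g x * cnj (h x))) summable_on UNIV"
    by (intro summable_on_comparison_test[OF s]) (auto simp: norm_mult)
  then show ?thesis using summable_on_iff_abs_summable_on_complex by blast
qed

lemma l2inner_add_left:
  "g \<in> l2 X \<Longrightarrow> g' \<in> l2 X \<Longrightarrow> h \<in> l2 X \<Longrightarrow> l2inner (\<lambda>x. g x + g' x) h = l2inner g h + l2inner g' h"
  unfolding l2inner_def distrib_right by (intro infsum_add summable_l2inner)

lemma l2inner_add_right:
  "g \<in> l2 X \<Longrightarrow> h \<in> l2 X \<Longrightarrow> h' \<in> l2 X \<Longrightarrow> l2inner g (\<lambda>x. h x + h' x) = l2inner g h + l2inner g h'"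
  unfolding l2inner_def complex_cnj_add distrib_left by (intro infsum_add summable_l2inner)

lemma l2inner_cmult_left: "l2inner (\<lambda>x. c * g x) h = c * l2inner g h"
  unfolding l2inner_def mult.assoc by (rule infsum_cmult_right')

lemma l2inner_cmult_right: "l2inner g (\<lambda>x. c * h x) = cnj c * l2inner g h"
  unfolding l2inner_def by (simp add: mult.left_commute infsum_cmult_right')

lemma l2inner_sum_left:
  "finite S \<Longrightarrow> (\<And>i. i \<in> S \<Longrightarrow> F i \<in> l2 X) \<Longrightarrow> h \<in> l2 X \<Longrightarrow>
    l2inner (\<lambda>x. \<Sum>i\<in>S. F i x) h = (\<Sum>i\<in>S. l2inner (F i) h)"
proof (induction S rule: finite_induct)
  case (insert a S)
  then show ?case by (simp add: l2inner_add_left[of _ X] l2_sum)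
qed (simp add: l2inner_def)

lemma l2inner_sum_right:
  "finite S \<Longrightarrow> (\<And>i. i \<in> S \<Longrightarrow> F i \<in> l2 X) \<Longrightarrow> h \<in> l2 X \<Longrightarrow>
    l2inner h (\<lambda>x. \<Sum>i\<in>S. F i x) = (\<Sum>i\<in>S. l2inner h (F i))"
proof (induction S rule: finite_induct)
  case (insert a S)
  then show ?case by (simp add: l2inner_add_right[of _ X] l2_sum)
qed (simp add: l2inner_def)

lemma l2inner_self:
  assumes "g \<in> l2 X" shows "l2inner g g = complex_of_real (sqnorm g)"
proof -
  have "((\<lambda>x. complex_of_real ((cmod (g x))\<^sup>2)) has_sum complex_of_real (sqnorm g)) UNIV"
    by (rule has_sum_of_real[OF has_sum_sqnorm[OF assms]])
  then show ?thesis
    unfolding l2inner_def complex_norm_square by (rule infsumI)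
qed

lemma l2_shift:
  fixes g :: "'a::ab_group_add \<Rightarrow> complex"
  assumes "\<And>x. cmod (c x) = 1"
  shows "(\<lambda>x. c x * g (x - a)) \<in> l2 UNIV \<longleftrightarrow> g \<in> l2 UNIV"
    and "sqnorm (\<lambda>x. c x * g (x - a)) = sqnorm g"
proof -
  have e: "(cmod (c x * g (x - a)))\<^sup>2 = (cmod (g (x - a)))\<^sup>2" for x
    by (simp add: norm_mult assms)
  show "(\<lambda>x. c x * g (x - a)) \<in> l2 UNIV \<longleftrightarrow> g \<in> l2 UNIV"
    unfolding l2_iff e
    by (simp, rule summable_on_reindex_bij_witness[of UNIV "\<lambda>x. x + a" "\<lambda>x. x - a"]) auto
  show "sqnorm (\<lambda>x. c x * g (x - a)) = sqnorm g"
    unfolding sqnorm_def e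
    by (rule infsum_reindex_bij_witness[of UNIV "\<lambda>x. x + a" "\<lambda>x. x - a"]) auto
qed

lemma bounded_op_zero:
  assumes "bounded_op X T" shows "T (\<lambda>x. 0) = (\<lambda>x. 0)"
proof -
  have "\<forall>g\<in>l2 X. \<forall>c. T (\<lambda>x. c * g x) = (\<lambda>x. c * T g x)"
    using assms unfolding bounded_op_def by blast
  from this[rule_format, OF l2_zero, of 0] show ?thesis by simp
qed

lemma bdd_above_opnorm_set:
  assumes "bounded_op X T"
  shows "bdd_above {l2norm (T g) |g. g \<in> l2 X \<and> l2norm g \<le> 1}"
proof -
  obtain C where C: "\<And>g. g \<in> l2 X \<Longrightarrow> l2norm (T g) \<le> C * l2norm g"
    using assms unfolding bounded_op_def by blast
  show ?thesis
  proof (rule bdd_aboveI)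
    fix q assume "q \<in> {l2norm (T g) |g. g \<in> l2 X \<and> l2norm g \<le> 1}"
    then obtain g where g: "g \<in> l2 X" "l2norm g \<le> 1" "q = l2norm (T g)" by auto
    have "q \<le> \<bar>C\<bar> * l2norm g"
      using C[OF g(1)] g(3) mult_right_mono[OF abs_ge_self l2norm_nonneg, of C g] by simp
    also have "\<dots> \<le> \<bar>C\<bar>"
      using g(2) by (simp add: mult_left_le)
    finally show "q \<le> \<bar>C\<bar>" .
  qed
qed

lemma opnorm_nonneg:
  assumes "bounded_op X T" shows "opnorm X T \<ge> 0"
proof -
  have "l2norm (T (\<lambda>x. 0)) \<in> {l2norm (T g) |g. g \<in> l2 X \<and> l2norm g \<le> 1}"
    using l2_zero l2norm_zero by fastforce
  then show ?thesis
    unfolding opnorm_def by (rule order_trans[OF l2norm_nonneg cSup_upper[OF _ bdd_above_opnorm_set[OF assms]]])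
qed

lemma opnorm_bound:
  assumes T: "bounded_op X T" and g: "g \<in> l2 X"
  shows "l2norm (T g) \<le> opnorm X T * l2norm g"
proof (cases "l2norm g = 0")
  case True
  then have "g = (\<lambda>x. 0)"
    using sqnorm_eq_0D[OF g] by (simp add: l2norm_eq_sqrt_sqnorm sqnorm_nonneg)
  then show ?thesis using bounded_op_zero[OF T] by simp
next
  case False
  then have gp: "l2norm g > 0" using l2norm_nonneg[of g] by simp
  define c where "c = complex_of_real (1 / l2norm g)"
  have "T (\<lambda>x. c * g x) = (\<lambda>x. c * T g x)"
    using T g unfolding bounded_op_def by blast
  moreover have "(\<lambda>x. c * g x) \<in> l2 X" by (rule l2_cmult[OF g])
  moreover have c: "cmod c = 1 / l2norm g"
    unfolding c_def norm_of_real using gp by simp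
  then have "l2norm (\<lambda>x. c * g x) = 1"
    unfolding l2norm_cmult using gp by simp
  ultimately have "l2norm (\<lambda>x. c * T g x) \<le> opnorm X T"
    unfolding opnorm_def by (intro cSup_upper[OF _ bdd_above_opnorm_set[OF T]]) force
  then have "l2norm (T g) / l2norm g \<le> opnorm X T"
    unfolding l2norm_cmult c by simp
  then show ?thesis
    using gp by (simp add: divide_le_eq mult.commute)
qed

lemma opnorm_le:
  assumes "\<And>g. g \<in> l2 X \<Longrightarrow> l2norm (T g) \<le> M * l2norm g" "M \<ge> 0"
  shows "opnorm X T \<le> M"
  unfolding opnorm_def
proof (rule cSup_least)
  show "{l2norm (T g) |g. g \<in> l2 X \<and> l2norm g \<le> 1} \<noteq> {}"
    using l2_zero by fastforce
next
  fix q assume "q \<in> {l2norm (T g) |g. g \<in> l2 X \<and> l2norm g \<le> 1}"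
  then obtain g where g: "g \<in> l2 X" "l2norm g \<le> 1" "q = l2norm (T g)" by auto
  have "q \<le> M * l2norm g" using assms(1) g by simp
  also have "\<dots> \<le> M" using g assms(2) by (simp add: mult_left_le)
  finally show "q \<le> M" .
qed

section \<open>Multiplication operators\<close>

lemma mult_dom_finite_support:
  assumes "finite F" "F \<subseteq> X" "\<And>x. x \<notin> F \<Longrightarrow> g x = 0"
  shows "g \<in> mult_dom X L"
  unfolding mult_dom_def
  using l2_finite_support[OF assms] l2_finite_support[OF assms(1,2), of "\<lambda>x. complex_of_real (L x) * g x"] assms(3)
  by simp

lemma mult_dom_dense: "dense_in_l2 X (mult_dom X L)"
  unfolding dense_in_l2_def
proof (intro conjI ballI allI impI)
  show "mult_dom X L \<subseteq> l2 X" by (auto simp: mult_dom_def)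
next
  fix h :: "'a \<Rightarrow> complex" and \<epsilon> :: real assume h: "h \<in> l2 X" and e: "\<epsilon> > 0"
  define q where "q = (\<lambda>x. (cmod (h x))\<^sup>2)"
  have sq: "q summable_on UNIV" using l2_summable[OF h] by (simp add: q_def)
  obtain F where F: "finite F" "dist (sum q F) (infsum q UNIV) \<le> \<epsilon>\<^sup>2 / 2"
    using infsum_finite_approximation[OF sq, of "\<epsilon>\<^sup>2 / 2"] e by auto
  define g where "g = (\<lambda>x. if x \<in> F then h x else 0)"
  have "g \<in> mult_dom X L"
    by (rule mult_dom_finite_support[of "F \<inter> X"]) (use F(1) l2_outside[OF h] in \<open>auto simp: g_def\<close>)
  have sq_in: "(\<lambda>x. if x \<in> F then q x else 0) summable_on UNIV"
    by (rule summable_on_UNIV_finite_support[OF F(1)]) simp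
  have sq_out: "(\<lambda>x. if x \<in> F then 0 else q x) summable_on UNIV"
    by (rule summable_on_comparison_test[OF sq]) (auto simp: q_def)
  have "infsum q UNIV = infsum (\<lambda>x. (if x \<in> F then q x else 0) + (if x \<in> F then 0 else q x)) UNIV"
    by (rule infsum_cong) simp
  also have "\<dots> = sum q F + infsum (\<lambda>x. if x \<in> F then 0 else q x) UNIV"
    using infsum_UNIV_finite_support[OF F(1), of "\<lambda>x. if x \<in> F then q x else 0"]
    by (simp add: infsum_add[OF sq_in sq_out])
  moreover have "sqnorm (\<lambda>x. h x - g x) = infsum (\<lambda>x. if x \<in> F then 0 else q x) UNIV"
    unfolding sqnorm_def g_def q_def by (rule infsum_cong) simp
  ultimately have "sqnorm (\<lambda>x. h x - g x) = infsum q UNIV - sum q F"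
    by simp
  also have "\<dots> < \<epsilon>\<^sup>2"
  proof -
    have "0 < \<epsilon>\<^sup>2" using e by simp
    then show ?thesis using F(2) unfolding dist_real_def by arith
  qed
  finally have "l2norm (\<lambda>x. h x - g x) < \<epsilon>"
    using e by (simp add: l2norm_eq_sqrt_sqnorm real_less_lsqrt sqnorm_nonneg)
  then show "\<exists>g\<in>mult_dom X L. l2norm (\<lambda>x. h x - g x) < \<epsilon>"
    using \<open>g \<in> mult_dom X L\<close> by blast
qed

lemma l2inner_point_support:
  "(\<And>y. y \<noteq> x \<Longrightarrow> u y = 0) \<Longrightarrow> l2inner u h = u x * cnj (h x)"
  unfolding l2inner_def by (subst infsum_UNIV_finite_support[of "{x}"]) auto

text \<open>Testing against the point masses identifies the adjoint of a multiplication operator.\<close>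

lemma mult_op_adjoint_dom:
  assumes h: "h \<in> l2 X" and k: "k \<in> l2 X"
    and adj: "\<And>g. g \<in> mult_dom X L \<Longrightarrow> l2inner (mult_op L g) h = l2inner g k"
  shows "h \<in> mult_dom X L"
proof -
  have "k x = complex_of_real (L x) * h x" for x
  proof (cases "x \<in> X")
    case False
    then show ?thesis using l2_outside[OF k] l2_outside[OF h] by simp
  next
    case True
    have "delta x \<in> mult_dom X L"
      by (rule mult_dom_finite_support[of "{x}"]) (use True in \<open>auto simp: delta_def\<close>)
    then have "l2inner (mult_op L (delta x)) h = l2inner (delta x) k"
      by (rule adj)
    then have "cnj (k x) = cnj (complex_of_real (L x) * h x)"
      by (subst (asm) (1 2) l2inner_point_support[of x]) (auto simp: mult_op_def delta_def)
    then show ?thesis by (metis complex_cnj_cnj)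
  qed
  then have "(\<lambda>x. complex_of_real (L x) * h x) = k" by auto
  then show ?thesis using h k by (simp add: mult_dom_def)
qed

lemma selfadjoint_mult_op: "selfadjoint X (mult_dom X L) (mult_op L)"
  unfolding selfadjoint_def
proof (intro conjI ballI allI)
  show "dense_in_l2 X (mult_dom X L)" by (rule mult_dom_dense)
next
  fix g assume "g \<in> mult_dom X L"
  then show "mult_op L g \<in> l2 X" by (simp add: mult_dom_def mult_op_def)
next
  fix g h assume "g \<in> mult_dom X L" "h \<in> mult_dom X L"
  then show "(\<lambda>x. g x + h x) \<in> mult_dom X L"
    by (auto simp: mult_dom_def distrib_left intro: l2_add)
  show "mult_op L (\<lambda>x. g x + h x) = (\<lambda>x. mult_op L g x + mult_op L h x)"
    by (simp add: mult_op_def distrib_left)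
next
  fix g c assume "g \<in> mult_dom X L"
  then show "(\<lambda>x. c * g x) \<in> mult_dom X L"
    using l2_cmult[of "\<lambda>x. complex_of_real (L x) * g x" X c]
    by (auto simp: mult_dom_def mult.left_commute intro: l2_cmult)
  show "mult_op L (\<lambda>x. c * g x) = (\<lambda>x. c * mult_op L g x)"
    by (simp add: mult_op_def mult.left_commute)
next
  fix g h
  show "l2inner (mult_op L g) h = l2inner g (mult_op L h)"
    unfolding l2inner_def mult_op_def by (simp add: mult_ac)
next
  fix h assume h: "h \<in> l2 X"
  have sym: "l2inner (mult_op L g) h = l2inner g (mult_op L h)" for g
    unfolding l2inner_def mult_op_def by (simp add: mult_ac)
  show "(\<exists>k\<in>l2 X. \<forall>g\<in>mult_dom X L. l2inner (mult_op L g) h = l2inner g k) \<longleftrightarrow> h \<in> mult_dom X L"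
  proof
    assume "\<exists>k\<in>l2 X. \<forall>g\<in>mult_dom X L. l2inner (mult_op L g) h = l2inner g k"
    then show "h \<in> mult_dom X L" using mult_op_adjoint_dom[OF h] by blast
  next
    assume "h \<in> mult_dom X L"
    then show "\<exists>k\<in>l2 X. \<forall>g\<in>mult_dom X L. l2inner (mult_op L g) h = l2inner g k"
      using sym by (intro bexI[of _ "mult_op L h"]) (auto simp: mult_dom_def mult_op_def)
  qed
qed

definition resolvent :: "('x \<Rightarrow> real) \<Rightarrow> ('x \<Rightarrow> complex) \<Rightarrow> 'x \<Rightarrow> complex" where
  "resolvent L g = (\<lambda>x. g x / (complex_of_real (L x) - \<i>))"

lemma norm_of_real_minus_ii_ge: "cmod (complex_of_real r - \<i>) \<ge> max 1 \<bar>r\<bar>"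
proof -
  have "(max 1 \<bar>r\<bar>)\<^sup>2 \<le> (cmod (complex_of_real r - \<i>))\<^sup>2"
    by (simp add: cmod_power2 max_def power2_abs)
  then show ?thesis by (rule power2_le_imp_le) simp
qed

lemma of_real_minus_ii_nonzero: "complex_of_real r - \<i> \<noteq> 0"
  using norm_of_real_minus_ii_ge[of r] by auto

lemma norm_resolvent_le:
  assumes "M \<le> max 1 \<bar>L x\<bar>" "M > 0"
  shows "cmod (resolvent L g x) \<le> cmod (g x) / M"
proof -
  have "M \<le> cmod (complex_of_real (L x) - \<i>)"
    using assms(1) norm_of_real_minus_ii_ge[of "L x"] by linarith
  then show ?thesis
    unfolding resolvent_def norm_divide using assms(2) of_real_minus_ii_nonzero[of "L x"]
    by (intro divide_left_mono) auto
qed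

lemma norm_resolvent_le_1: "cmod (resolvent L g x) \<le> 1 * cmod (g x)"
  using norm_resolvent_le[of 1 L x g] by simp

lemma norm_mult_resolvent_le: "cmod (complex_of_real (L x) * resolvent L g x) \<le> 1 * cmod (g x)"
proof -
  have "\<bar>L x\<bar> * cmod (g x) \<le> cmod (complex_of_real (L x) - \<i>) * cmod (g x)"
    using norm_of_real_minus_ii_ge[of "L x"] by (intro mult_right_mono) auto
  then show ?thesis
    using of_real_minus_ii_nonzero[of "L x"]
    by (simp add: resolvent_def norm_mult norm_divide divide_le_eq mult.commute)
qed

lemma bounded_op_resolvent: "bounded_op X (resolvent L)"
  unfolding bounded_op_def
proof (intro conjI ballI allI exI)
  fix g assume g: "g \<in> l2 X"
  show "resolvent L g \<in> l2 X" by (rule l2_dominated(1)[OF g norm_resolvent_le_1[of L g]])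
  show "l2norm (resolvent L g) \<le> 1 * l2norm g"
    by (rule l2norm_dominated[OF g norm_resolvent_le_1[of L g]]) simp
qed (simp_all add: resolvent_def add_divide_distrib)

lemma resolvent_mult_dom:
  assumes g: "g \<in> l2 X"
  shows "resolvent L g \<in> mult_dom X L"
  unfolding mult_dom_def
  using l2_dominated(1)[OF g norm_resolvent_le_1[of L g]] l2_dominated(1)[OF g norm_mult_resolvent_le[of L _ g]]
  by simp

lemma mult_op_minus_ii_resolvent: "(\<lambda>x. mult_op L (resolvent L g) x - \<i> * resolvent L g x) = g"
proof
  fix x
  have "mult_op L (resolvent L g) x - \<i> * resolvent L g x
      = (complex_of_real (L x) - \<i>) * (g x / (complex_of_real (L x) - \<i>))"
    unfolding mult_op_def resolvent_def left_diff_distrib ..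
  then show "mult_op L (resolvent L g) x - \<i> * resolvent L g x = g x"
    using of_real_minus_ii_nonzero[of "L x"] by simp
qed

lemma resolvent_mult_op_minus_ii: "resolvent L (\<lambda>x. mult_op L g x - \<i> * g x) = g"
proof
  fix x
  have "resolvent L (\<lambda>x. mult_op L g x - \<i> * g x) x
      = ((complex_of_real (L x) - \<i>) * g x) / (complex_of_real (L x) - \<i>)"
    unfolding mult_op_def resolvent_def left_diff_distrib ..
  then show "resolvent L (\<lambda>x. mult_op L g x - \<i> * g x) x = g x"
    using of_real_minus_ii_nonzero[of "L x"] by simp
qed

definition grid_round :: "real \<Rightarrow> complex \<Rightarrow> complex" where
  "grid_round \<delta> c = (of_int \<lfloor>Re c / \<delta>\<rfloor> + \<i> * of_int \<lfloor>Im c / \<delta>\<rfloor>) * complex_of_real \<delta>"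

lemma floor_divide_approx:
  fixes a \<delta> :: real
  assumes "\<delta> > 0"
  shows "(a - \<delta> * of_int \<lfloor>a / \<delta>\<rfloor>)\<^sup>2 \<le> \<delta>\<^sup>2"
proof -
  have "\<delta> * of_int \<lfloor>a / \<delta>\<rfloor> \<le> \<delta> * (a / \<delta>)" "\<delta> * (a / \<delta>) < \<delta> * (of_int \<lfloor>a / \<delta>\<rfloor> + 1)"
    using assms by (intro mult_left_mono mult_strict_left_mono; linarith)+
  then have "0 \<le> a - \<delta> * of_int \<lfloor>a / \<delta>\<rfloor>" "a - \<delta> * of_int \<lfloor>a / \<delta>\<rfloor> \<le> \<delta>"
    using assms by (simp_all add: distrib_left)
  then show ?thesis by (intro power_mono) auto
qed

lemma norm_grid_round_error: "\<delta> > 0 \<Longrightarrow> (cmod (c - grid_round \<delta> c))\<^sup>2 \<le> 2 * \<delta>\<^sup>2"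
  using floor_divide_approx[of \<delta> "Re c"] floor_divide_approx[of \<delta> "Im c"]
  by (simp add: cmod_power2 grid_round_def mult_ac)

lemma floor_divide_bounded:
  fixes a \<delta> :: real
  assumes "\<delta> > 0" "\<bar>a\<bar> \<le> 1"
  shows "\<lfloor>a / \<delta>\<rfloor> \<in> {- \<lceil>1 / \<delta>\<rceil>..\<lceil>1 / \<delta>\<rceil>}"
proof -
  have "- (1 / \<delta>) \<le> a / \<delta>" "a / \<delta> \<le> 1 / \<delta>"
    using divide_right_mono[of "- 1" a \<delta>] divide_right_mono[of a 1 \<delta>] assms by (auto simp: abs_le_iff)
  then have "\<lfloor>- (1 / \<delta>)\<rfloor> \<le> \<lfloor>a / \<delta>\<rfloor>" "\<lfloor>a / \<delta>\<rfloor> \<le> \<lfloor>1 / \<delta>\<rfloor>"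
    by (simp_all add: floor_mono)
  then show ?thesis by (simp add: floor_minus) (use floor_le_ceiling[of "1 / \<delta>"] in linarith)
qed

lemma finite_grid_round_unit_ball:
  assumes "\<delta> > 0"
  shows "finite (grid_round \<delta> ` {c. cmod c \<le> 1})"
proof -
  define K where "K = {- \<lceil>1 / \<delta>\<rceil>..\<lceil>1 / \<delta>\<rceil>}"
  have "grid_round \<delta> ` {c. cmod c \<le> 1} \<subseteq> (\<lambda>(j, k). (of_int j + \<i> * of_int k) * complex_of_real \<delta>) ` (K \<times> K)"
  proof clarify
    fix c :: complex assume "cmod c \<le> 1"
    then have "\<bar>Re c\<bar> \<le> 1" "\<bar>Im c\<bar> \<le> 1"
      using abs_Re_le_cmod abs_Im_le_cmod order_trans by blast+
    then have "(\<lfloor>Re c / \<delta>\<rfloor>, \<lfloor>Im c / \<delta>\<rfloor>) \<in> K \<times> K"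
      unfolding K_def using floor_divide_bounded[OF assms] by blast
    then show "grid_round \<delta> c \<in> (\<lambda>(j, k). (of_int j + \<i> * of_int k) * complex_of_real \<delta>) ` (K \<times> K)"
      unfolding grid_round_def by (rule rev_image_eqI) simp
  qed
  then show ?thesis by (rule finite_subset) (simp add: K_def)
qed

text \<open>On the finite set where \<open>L \<le> M\<close> the resolvent is rounded to a grid of mesh \<open>\<delta>\<close>; elsewhere it
  is small because \<open>\<bar>(L x - \<i>)\<^sup>-\<^sup>1\<bar> < 1 / M\<close>.\<close>

lemma sqnorm_resolvent_minus_rounding:
  assumes g: "g \<in> l2 X" and M: "M > 0" and \<delta>: "\<delta> > 0"
    and S: "finite S" "{x \<in> X. L x \<le> M} \<subseteq> S"
  defines "h \<equiv> (\<lambda>x. if x \<in> S then grid_round \<delta> (resolvent L g x) else 0)"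
  shows "sqnorm (\<lambda>x. resolvent L g x - h x) \<le> 2 * \<delta>\<^sup>2 * card S + sqnorm g / M\<^sup>2"
proof -
  define B where "B = (\<lambda>x. (if x \<in> S then 2 * \<delta>\<^sup>2 else 0) + 1 / M\<^sup>2 * (cmod (g x))\<^sup>2)"
  have pointwise: "(cmod (resolvent L g x - h x))\<^sup>2 \<le> B x" for x
  proof (cases "x \<in> S")
    case True
    then show ?thesis
      using norm_grid_round_error[OF \<delta>, of "resolvent L g x"] by (simp add: B_def h_def add_increasing2)
  next
    case False
    show ?thesis
    proof (cases "x \<in> X")
      case True
      then have "M \<le> max 1 \<bar>L x\<bar>" using False S(2) by auto
      then have "(cmod (resolvent L g x))\<^sup>2 \<le> (cmod (g x) / M)\<^sup>2"
        by (intro power_mono norm_resolvent_le[OF _ M]) auto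
      then show ?thesis using False by (simp add: B_def h_def power_divide)
    next
      case False
      then show ?thesis using \<open>x \<notin> S\<close> l2_outside[OF g False] by (simp add: B_def h_def resolvent_def)
    qed
  qed
  have s1: "(\<lambda>x. if x \<in> S then 2 * \<delta>\<^sup>2 else 0) summable_on UNIV"
    by (rule summable_on_UNIV_finite_support[OF S(1)]) simp
  have s2: "(\<lambda>x. 1 / M\<^sup>2 * (cmod (g x))\<^sup>2) summable_on UNIV"
    using l2_summable[OF g] by (rule summable_on_cmult_right)
  have sB: "B summable_on UNIV" unfolding B_def by (rule summable_on_add[OF s1 s2])
  have "sqnorm (\<lambda>x. resolvent L g x - h x) \<le> infsum B UNIV"
    unfolding sqnorm_def
    by (rule infsum_mono[OF summable_on_comparison_test[OF sB] sB pointwise]) (use pointwise in auto)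
  also have "\<dots> = 2 * \<delta>\<^sup>2 * card S + sqnorm g / M\<^sup>2"
  proof -
    have "infsum (\<lambda>x. if x \<in> S then 2 * \<delta>\<^sup>2 else 0) UNIV = 2 * \<delta>\<^sup>2 * card S"
      using infsum_UNIV_finite_support[OF S(1), of "\<lambda>x. if x \<in> S then 2 * \<delta>\<^sup>2 else 0"] by simp
    moreover have "infsum (\<lambda>x. 1 / M\<^sup>2 * (cmod (g x))\<^sup>2) UNIV = sqnorm g / M\<^sup>2"
      unfolding sqnorm_def infsum_cmult_right' by simp
    ultimately show ?thesis unfolding B_def infsum_add[OF s1 s2] by simp
  qed
  finally show ?thesis .
qed

lemma compact_op_resolvent:
  assumes fin: "\<And>M. finite {x \<in> X. L x \<le> M}"
  shows "compact_op X (resolvent L)"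
  unfolding compact_op_def
proof (intro allI impI)
  fix \<epsilon> :: real assume e: "\<epsilon> > 0"
  define M where "M = 2 / \<epsilon>"
  define S where "S = {x \<in> X. L x \<le> M}"
  define \<delta> where "\<delta> = \<epsilon> / (2 * sqrt (2 * (card S + 1)))"
  have M0: "M > 0" and d0: "\<delta> > 0" using e by (simp_all add: M_def \<delta>_def)
  define G where "G = grid_round \<delta> ` {c. cmod c \<le> 1}"
  define Fs where "Fs = {h :: 'a \<Rightarrow> complex. \<forall>x. (x \<in> S \<longrightarrow> h x \<in> G) \<and> (x \<notin> S \<longrightarrow> h x = 0)}"
  have S: "finite S" "S \<subseteq> X" by (auto simp: S_def fin)
  have "finite Fs"
    unfolding Fs_def using S(1) finite_grid_round_unit_ball[OF d0]
    by (intro finite_set_of_finite_funs) (simp_all add: G_def)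
  moreover have "Fs \<subseteq> l2 X"
    by (auto simp: Fs_def intro: l2_finite_support[OF S])
  moreover have "\<exists>h\<in>Fs. l2norm (\<lambda>x. resolvent L g x - h x) < \<epsilon>" if g: "g \<in> l2 X" "l2norm g \<le> 1" for g
  proof
    define h where "h = (\<lambda>x. if x \<in> S then grid_round \<delta> (resolvent L g x) else 0)"
    have "cmod (resolvent L g x) \<le> 1" for x
      using norm_resolvent_le_1[of L g x] norm_le_l2norm[OF g(1), of x] g(2) by linarith
    then show "h \<in> Fs" unfolding Fs_def G_def h_def by auto
    have "\<delta>\<^sup>2 = \<epsilon>\<^sup>2 / (4 * (2 * (card S + 1)))"
      unfolding \<delta>_def power_divide power_mult_distrib by simp
    then have "2 * \<delta>\<^sup>2 * card S = \<epsilon>\<^sup>2 / 4 * (card S / (card S + 1))"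
      by (simp add: field_simps)
    also have "\<dots> \<le> \<epsilon>\<^sup>2 / 4"
      by (intro mult_left_le) auto
    finally have 1: "2 * \<delta>\<^sup>2 * card S \<le> \<epsilon>\<^sup>2 / 4" .
    have "sqnorm g \<le> 1"
      using g(2) l2norm_nonneg[of g] power_le_one[of "l2norm g" 2] by (simp add: l2norm_power2)
    then have 2: "sqnorm g / M\<^sup>2 \<le> \<epsilon>\<^sup>2 / 4"
      using e by (simp add: M_def power_divide mult_left_le)
    have "sqnorm (\<lambda>x. resolvent L g x - h x) \<le> 2 * \<delta>\<^sup>2 * card S + sqnorm g / M\<^sup>2"
      unfolding h_def by (rule sqnorm_resolvent_minus_rounding[OF g(1) M0 d0]) (auto simp: S_def fin)
    moreover have "0 < \<epsilon>\<^sup>2" using e by simp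
    ultimately have "sqnorm (\<lambda>x. resolvent L g x - h x) < \<epsilon>\<^sup>2"
      using 1 2 by linarith
    then show "l2norm (\<lambda>x. resolvent L g x - h x) < \<epsilon>"
      using e by (simp add: l2norm_eq_sqrt_sqnorm real_sqrt_less_iff real_less_lsqrt sqnorm_nonneg)
  qed
  ultimately show "\<exists>F. finite F \<and> F \<subseteq> l2 X \<and>
      (\<forall>g\<in>l2 X. l2norm g \<le> 1 \<longrightarrow> (\<exists>h\<in>F. l2norm (\<lambda>x. resolvent L g x - h x) < \<epsilon>))"
    by blast
qed

lemma compact_resolvent_mult_op:
  assumes "\<And>M. finite {x \<in> X. L x \<le> M}"
  shows "compact_resolvent X (mult_dom X L) (mult_op L)"
  unfolding compact_resolvent_def
  by (intro exI[of _ "resolvent L"] conjI ballI bounded_op_resolvent resolvent_mult_dom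
      mult_op_minus_ii_resolvent resolvent_mult_op_minus_ii compact_op_resolvent assms)

section \<open>Representations of twisted group algebras\<close>

lemma twinv_CC:
  assumes "f \<in> CC" shows "twinv \<sigma> f \<in> CC"
proof -
  have "{\<gamma>. twinv \<sigma> f \<gamma> \<noteq> 0} \<subseteq> uminus ` {z. f z \<noteq> 0}"
  proof
    fix \<gamma> assume "\<gamma> \<in> {\<gamma>. twinv \<sigma> f \<gamma> \<noteq> 0}"
    then show "\<gamma> \<in> uminus ` {z. f z \<noteq> 0}"
      by (intro image_eqI[of _ _ "- \<gamma>"]) (auto simp: twinv_def)
  qed
  then show ?thesis using assms unfolding CC_def by (auto intro: finite_subset)
qed

lemma delta_CC [simp]: "delta z \<in> CC"
  by (simp add: CC_def delta_def)

lemma CC_finite_support: "f \<in> CC \<Longrightarrow> finite {z. f z \<noteq> 0}"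
  by (simp add: CC_def)

lemma sum_delta_CC:
  assumes "finite S" shows "(\<lambda>\<gamma>. \<Sum>z\<in>S. c z * delta z \<gamma>) \<in> CC"
proof -
  have "{\<gamma>. (\<Sum>z\<in>S. c z * delta z \<gamma>) \<noteq> 0} \<subseteq> S"
  proof
    fix \<gamma> assume "\<gamma> \<in> {\<gamma>. (\<Sum>z\<in>S. c z * delta z \<gamma>) \<noteq> 0}"
    then obtain z where "z \<in> S" "c z * delta z \<gamma> \<noteq> 0"
      by (auto elim: sum.not_neutral_contains_not_neutral)
    then show "\<gamma> \<in> S" by (auto simp: delta_def split: if_splits)
  qed
  then show ?thesis using assms by (auto simp: CC_def intro: finite_subset)
qed

lemma CC_eq_sum_delta: "f \<in> CC \<Longrightarrow> f = (\<lambda>\<gamma>. \<Sum>z\<in>{z. f z \<noteq> 0}. f z * delta z \<gamma>)"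
proof
  fix \<gamma> assume f: "f \<in> CC"
  have "(\<Sum>z\<in>{z. f z \<noteq> 0}. f z * delta z \<gamma>) = (\<Sum>z\<in>{\<gamma>} \<inter> {z. f z \<noteq> 0}. f z * delta z \<gamma>)"
    by (rule sum.mono_neutral_right) (use f in \<open>auto simp: CC_def delta_def\<close>)
  then show "f \<gamma> = (\<Sum>z\<in>{z. f z \<noteq> 0}. f z * delta z \<gamma>)"
    by (cases "f \<gamma> = 0") (auto simp: delta_def)
qed

lemma twconv_delta: "twconv \<sigma> (delta z) (delta w) = (\<lambda>\<gamma>. \<sigma> z w * delta (z + w) \<gamma>)"
proof
  fix \<gamma>
  have "{\<gamma>1. delta z \<gamma>1 \<noteq> 0} = {z}" by (auto simp: delta_def)
  then show "twconv \<sigma> (delta z) (delta w) \<gamma> = \<sigma> z w * delta (z + w) \<gamma>"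
    by (auto simp: twconv_def delta_def algebra_simps)
qed

context
  fixes \<sigma> :: "'g::ab_group_add \<Rightarrow> 'g \<Rightarrow> complex" and X :: "'x set" and \<rho>
  assumes \<rho>: "star_rep \<sigma> X \<rho>"
begin

lemma star_rep_bounded: "f \<in> CC \<Longrightarrow> bounded_op X (\<rho> f)"
  using \<rho> unfolding star_rep_def by (elim conjE) blast

lemma star_rep_l2: "f \<in> CC \<Longrightarrow> h \<in> l2 X \<Longrightarrow> \<rho> f h \<in> l2 X"
  using star_rep_bounded unfolding bounded_op_def by blast

lemma star_rep_add_left:
  "f \<in> CC \<Longrightarrow> f' \<in> CC \<Longrightarrow> h \<in> l2 X \<Longrightarrow> \<rho> (\<lambda>\<gamma>. f \<gamma> + f' \<gamma>) h = (\<lambda>x. \<rho> f h x + \<rho> f' h x)"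
  using \<rho> unfolding star_rep_def by (elim conjE) blast

lemma star_rep_cmult_left:
  "f \<in> CC \<Longrightarrow> h \<in> l2 X \<Longrightarrow> \<rho> (\<lambda>\<gamma>. c * f \<gamma>) h = (\<lambda>x. c * \<rho> f h x)"
  using \<rho> unfolding star_rep_def by (elim conjE) blast

lemma star_rep_twconv:
  "f \<in> CC \<Longrightarrow> f' \<in> CC \<Longrightarrow> h \<in> l2 X \<Longrightarrow> \<rho> (twconv \<sigma> f f') h = \<rho> f (\<rho> f' h)"
  using \<rho> unfolding star_rep_def by (elim conjE) blast

lemma star_rep_twinv:
  "f \<in> CC \<Longrightarrow> h \<in> l2 X \<Longrightarrow> k \<in> l2 X \<Longrightarrow> l2inner (\<rho> (twinv \<sigma> f) h) k = l2inner h (\<rho> f k)"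
  using \<rho> unfolding star_rep_def by (elim conjE) blast

lemma star_rep_unit: "h \<in> l2 X \<Longrightarrow> \<rho> (delta 0) h = h"
  using \<rho> unfolding star_rep_def by (elim conjE) blast

lemma star_rep_cmult_right: "f \<in> CC \<Longrightarrow> g \<in> l2 X \<Longrightarrow> \<rho> f (\<lambda>x. c * g x) = (\<lambda>x. c * \<rho> f g x)"
  using star_rep_bounded unfolding bounded_op_def by blast

lemma star_rep_sum_right:
  assumes "f \<in> CC" "finite S" "\<And>i. i \<in> S \<Longrightarrow> F i \<in> l2 X"
  shows "\<rho> f (\<lambda>x. \<Sum>i\<in>S. F i x) = (\<lambda>x. \<Sum>i\<in>S. \<rho> f (F i) x)"
  using assms(2,3)
proof (induction S rule: finite_induct)
  case empty
  then show ?case using bounded_op_zero[OF star_rep_bounded[OF assms(1)]] by simp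
next
  case (insert a S)
  then show ?case
    using star_rep_bounded[OF assms(1)] l2_sum[of S F X] unfolding bounded_op_def by simp
qed

lemma star_rep_sum_delta:
  assumes "finite S" "h \<in> l2 X"
  shows "\<rho> (\<lambda>\<gamma>. \<Sum>z\<in>S. c z * delta z \<gamma>) h = (\<lambda>x. \<Sum>z\<in>S. c z * \<rho> (delta z) h x)"
  using assms(1)
proof (induction S rule: finite_induct)
  case empty
  show ?case using star_rep_cmult_left[OF delta_CC assms(2), of 0 0] by simp
next
  case (insert a S)
  have "(\<lambda>\<gamma>. c a * delta a \<gamma>) \<in> CC" using sum_delta_CC[of "{a}" c] by simp
  moreover have "(\<lambda>\<gamma>. \<Sum>z\<in>S. c z * delta z \<gamma>) \<in> CC" using sum_delta_CC insert by blast
  ultimately show ?case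
    using insert by (simp add: star_rep_add_left[OF _ _ assms(2)] star_rep_cmult_left[OF delta_CC assms(2)])
qed

lemma star_rep_eq_sum_delta:
  "f \<in> CC \<Longrightarrow> h \<in> l2 X \<Longrightarrow> \<rho> f h = (\<lambda>x. \<Sum>z\<in>{z. f z \<noteq> 0}. f z * \<rho> (delta z) h x)"
  by (subst CC_eq_sum_delta, assumption, rule star_rep_sum_delta) (auto simp: CC_def)

lemma star_rep_delta_delta:
  assumes h: "h \<in> l2 X"
  shows "\<rho> (delta z) (\<rho> (delta w) h) = (\<lambda>x. \<sigma> z w * \<rho> (delta (z + w)) h x)"
proof -
  have "\<rho> (delta z) (\<rho> (delta w) h) = \<rho> (twconv \<sigma> (delta z) (delta w)) h"
    by (rule star_rep_twconv[OF delta_CC delta_CC h, symmetric])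
  also have "\<dots> = (\<lambda>x. \<sigma> z w * \<rho> (delta (z + w)) h x)"
    unfolding twconv_delta by (rule star_rep_cmult_left[OF delta_CC h])
  finally show ?thesis .
qed

end

lemma sigma_Z2_uminus_self: "sigma_Z2 t (- z) z = 1"
  by (simp add: sigma_Z2_def algebra_simps)

lemma twinv_sigma_Z2: "twinv (sigma_Z2 t) f = (\<lambda>\<gamma>. cnj (f (- \<gamma>)))"
  by (rule ext) (simp add: twinv_def sigma_Z2_uminus_self)

lemma twinv_delta: "twinv (sigma_Z2 t) (delta (- z)) = delta z"
  by (auto simp: twinv_sigma_Z2 delta_def)

lemma sqnorm_star_rep_delta:
  assumes \<rho>: "star_rep (sigma_Z2 t) X \<rho>" and h: "h \<in> l2 X"
  shows "sqnorm (\<rho> (delta z) h) = sqnorm h"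
proof -
  have \<rho>h: "\<rho> (delta z) h \<in> l2 X" by (rule star_rep_l2[OF \<rho> delta_CC h])
  have "l2inner (\<rho> (twinv (sigma_Z2 t) (delta (- z))) h) (\<rho> (delta z) h)
      = l2inner h (\<rho> (delta (- z)) (\<rho> (delta z) h))"
    by (rule star_rep_twinv[OF \<rho> delta_CC h \<rho>h])
  also have "\<dots> = l2inner h h"
    by (simp add: star_rep_delta_delta[OF \<rho> h] sigma_Z2_uminus_self star_rep_unit[OF \<rho> h])
  finally have "complex_of_real (sqnorm (\<rho> (delta z) h)) = complex_of_real (sqnorm h)"
    using l2inner_self[OF \<rho>h] l2inner_self[OF h] by (simp add: twinv_delta)
  then show ?thesis by simp
qed

section \<open>Transport of representations and the universal norm\<close>

lemma
  fixes F :: "'a \<Rightarrow> 'b::{comm_monoid_add,t2_space}"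
  assumes b: "bij_betw b UNIV X" and F: "\<And>x. x \<notin> X \<Longrightarrow> F x = 0"
  shows summable_on_UNIV_bij_betw: "(\<lambda>k. F (b k)) summable_on UNIV \<longleftrightarrow> F summable_on UNIV"
    and infsum_UNIV_bij_betw: "infsum (\<lambda>k. F (b k)) UNIV = infsum F UNIV"
proof -
  have "(\<lambda>k. F (b k)) summable_on UNIV \<longleftrightarrow> F summable_on X"
    by (rule summable_on_reindex_bij_betw[OF b])
  also have "\<dots> \<longleftrightarrow> F summable_on UNIV"
    by (rule summable_on_cong_neutral) (use F in auto)
  finally show "(\<lambda>k. F (b k)) summable_on UNIV \<longleftrightarrow> F summable_on UNIV" .
  have "infsum (\<lambda>k. F (b k)) UNIV = infsum F X"
    by (rule infsum_reindex_bij_betw[OF b])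
  also have "\<dots> = infsum F UNIV"
    by (rule infsum_cong_neutral) (use F in auto)
  finally show "infsum (\<lambda>k. F (b k)) UNIV = infsum F UNIV" .
qed

definition pull :: "('y \<Rightarrow> 'x) \<Rightarrow> ('x \<Rightarrow> complex) \<Rightarrow> 'y \<Rightarrow> complex" where
  "pull b g = (\<lambda>k. g (b k))"

definition push :: "('y \<Rightarrow> 'x) \<Rightarrow> 'x set \<Rightarrow> ('y \<Rightarrow> complex) \<Rightarrow> 'x \<Rightarrow> complex" where
  "push b X h = (\<lambda>x. if x \<in> X then h (inv_into UNIV b x) else 0)"

definition transport_rep :: "('y \<Rightarrow> 'x) \<Rightarrow> 'x set \<Rightarrow> ('f \<Rightarrow> ('x \<Rightarrow> complex) \<Rightarrow> 'x \<Rightarrow> complex) \<Rightarrow>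
    'f \<Rightarrow> ('y \<Rightarrow> complex) \<Rightarrow> 'y \<Rightarrow> complex" where
  "transport_rep b X \<pi> f h = pull b (\<pi> f (push b X h))"

context
  fixes b :: "'y \<Rightarrow> 'x" and X :: "'x set"
  assumes b: "bij_betw b UNIV X"
begin

lemma pull_push [simp]: "pull b (push b X h) = h"
  using b by (auto simp: pull_def push_def bij_betw_def)

lemma push_pull: "g \<in> l2 X \<Longrightarrow> push b X (pull b g) = g"
  using b by (auto simp: pull_def push_def bij_betw_def f_inv_into_f l2_outside)

lemma l2_pull:
  assumes g: "g \<in> l2 X" shows "pull b g \<in> l2 UNIV"
proof (rule l2I)
  have "(\<lambda>k. (cmod (g (b k)))\<^sup>2) summable_on UNIV \<longleftrightarrow> (\<lambda>x. (cmod (g x))\<^sup>2) summable_on UNIV"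
    by (rule summable_on_UNIV_bij_betw[OF b]) (simp add: l2_outside[OF g])
  then show "(\<lambda>k. (cmod (pull b g k))\<^sup>2) summable_on UNIV"
    using l2_summable[OF g] unfolding pull_def by blast
qed simp

lemma sqnorm_pull:
  assumes g: "g \<in> l2 X" shows "sqnorm (pull b g) = sqnorm g"
  unfolding sqnorm_def pull_def
  by (rule infsum_UNIV_bij_betw[OF b]) (simp add: l2_outside[OF g])

lemma l2inner_pull:
  assumes g: "g \<in> l2 X" shows "l2inner (pull b g) (pull b g') = l2inner g g'"
  unfolding l2inner_def pull_def
  by (rule infsum_UNIV_bij_betw[OF b]) (simp add: l2_outside[OF g])

lemma l2_push: "h \<in> l2 UNIV \<Longrightarrow> push b X h \<in> l2 X"
proof -
  assume h: "h \<in> l2 UNIV"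
  have "(\<lambda>k. (cmod (push b X h (b k)))\<^sup>2) summable_on UNIV"
    using l2_summable[OF h] pull_push[of h] unfolding pull_def by metis
  then have "(\<lambda>x. (cmod (push b X h x))\<^sup>2) summable_on UNIV"
    by (subst (asm) summable_on_UNIV_bij_betw[OF b]) (simp_all add: push_def)
  then show ?thesis by (rule l2I) (simp add: push_def)
qed

lemma sqnorm_push: "h \<in> l2 UNIV \<Longrightarrow> sqnorm (push b X h) = sqnorm h"
  using sqnorm_pull[OF l2_push] by simp

lemma bounded_op_transport:
  assumes T: "bounded_op X T"
  shows "bounded_op UNIV (\<lambda>h. pull b (T (push b X h)))"
    and "h \<in> l2 UNIV \<Longrightarrow> l2norm (pull b (T (push b X h))) = l2norm (T (push b X h))"
proof -
  have T_l2: "T g \<in> l2 X" if "g \<in> l2 X" for g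
    using T that unfolding bounded_op_def by blast
  show norm_eq: "l2norm (pull b (T (push b X h))) = l2norm (T (push b X h))" if "h \<in> l2 UNIV" for h
    using sqnorm_pull[OF T_l2[OF l2_push[OF that]]] by (simp add: l2norm_eq_sqrt_sqnorm)
  obtain C where C: "\<And>g. g \<in> l2 X \<Longrightarrow> l2norm (T g) \<le> C * l2norm g"
    using T unfolding bounded_op_def by blast
  have "l2norm (pull b (T (push b X h))) \<le> C * l2norm h" if "h \<in> l2 UNIV" for h
    using C[OF l2_push[OF that]] norm_eq[OF that] sqnorm_push[OF that]
    by (simp add: l2norm_eq_sqrt_sqnorm)
  moreover have "push b X (\<lambda>x. g x + h x) = (\<lambda>x. push b X g x + push b X h x)"
    and "push b X (\<lambda>x. c * g x) = (\<lambda>x. c * push b X g x)" for g h :: "'y \<Rightarrow> complex" and c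
    by (auto simp: push_def)
  ultimately show "bounded_op UNIV (\<lambda>h. pull b (T (push b X h)))"
    using T l2_push l2_pull[OF T_l2] unfolding bounded_op_def by (auto simp: pull_def)
qed

lemma star_rep_transport:
  fixes \<sigma> :: "'g::ab_group_add \<Rightarrow> 'g \<Rightarrow> complex"
  assumes \<pi>: "star_rep \<sigma> X \<pi>"
  shows "star_rep \<sigma> (UNIV :: 'y set) (transport_rep b X \<pi>)"
  unfolding star_rep_def
proof (intro conjI ballI allI)
  fix f :: "'g \<Rightarrow> complex" assume "f \<in> CC"
  then show "bounded_op UNIV (transport_rep b X \<pi> f)"
    using bounded_op_transport(1)[OF star_rep_bounded[OF \<pi>]] unfolding transport_rep_def by blast
next
  fix f f' :: "'g \<Rightarrow> complex" and h :: "'y \<Rightarrow> complex" assume f: "f \<in> CC" "f' \<in> CC" "h \<in> l2 UNIV"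
  show "transport_rep b X \<pi> (\<lambda>\<gamma>. f \<gamma> + f' \<gamma>) h
      = (\<lambda>x. transport_rep b X \<pi> f h x + transport_rep b X \<pi> f' h x)"
    by (simp add: transport_rep_def pull_def star_rep_add_left[OF \<pi> f(1,2) l2_push[OF f(3)]])
  show "transport_rep b X \<pi> (twconv \<sigma> f f') h = transport_rep b X \<pi> f (transport_rep b X \<pi> f' h)"
    by (simp add: transport_rep_def star_rep_twconv[OF \<pi> f(1,2) l2_push[OF f(3)]]
        push_pull[OF star_rep_l2[OF \<pi> f(2) l2_push[OF f(3)]]])
next
  fix f :: "'g \<Rightarrow> complex" and c and h :: "'y \<Rightarrow> complex" assume "f \<in> CC" "h \<in> l2 UNIV"
  then show "transport_rep b X \<pi> (\<lambda>\<gamma>. c * f \<gamma>) h = (\<lambda>x. c * transport_rep b X \<pi> f h x)"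
    by (simp add: transport_rep_def pull_def star_rep_cmult_left[OF \<pi>] l2_push)
next
  fix f :: "'g \<Rightarrow> complex" and h k :: "'y \<Rightarrow> complex" assume f: "f \<in> CC" "h \<in> l2 UNIV" "k \<in> l2 UNIV"
  have "l2inner (transport_rep b X \<pi> (twinv \<sigma> f) h) k
      = l2inner (pull b (\<pi> (twinv \<sigma> f) (push b X h))) (pull b (push b X k))"
    by (simp add: transport_rep_def)
  also have "\<dots> = l2inner (\<pi> (twinv \<sigma> f) (push b X h)) (push b X k)"
    by (rule l2inner_pull[OF star_rep_l2[OF \<pi> twinv_CC[OF f(1)] l2_push[OF f(2)]]])
  also have "\<dots> = l2inner (push b X h) (\<pi> f (push b X k))"
    by (rule star_rep_twinv[OF \<pi> f(1) l2_push[OF f(2)] l2_push[OF f(3)]])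
  also have "\<dots> = l2inner h (transport_rep b X \<pi> f k)"
    using l2inner_pull[OF l2_push[OF f(2)]] by (simp add: transport_rep_def)
  finally show "l2inner (transport_rep b X \<pi> (twinv \<sigma> f) h) k = l2inner h (transport_rep b X \<pi> f k)" .
next
  fix h :: "'y \<Rightarrow> complex" assume "h \<in> l2 UNIV"
  then show "transport_rep b X \<pi> (delta 0) h = h"
    by (simp add: transport_rep_def star_rep_unit[OF \<pi>] l2_push)
qed

lemma opnorm_transport:
  assumes T: "bounded_op X T"
  shows "opnorm UNIV (\<lambda>h. pull b (T (push b X h))) = opnorm X T"
proof -
  have T_l2: "T g \<in> l2 X" if "g \<in> l2 X" for g
    using T that unfolding bounded_op_def by blast
  have "{l2norm (pull b (T (push b X h))) |h. h \<in> l2 UNIV \<and> l2norm h \<le> 1}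
      = {l2norm (T g) |g. g \<in> l2 X \<and> l2norm g \<le> 1}"
  proof (intro set_eqI iffI)
    fix q assume "q \<in> {l2norm (pull b (T (push b X h))) |h. h \<in> l2 UNIV \<and> l2norm h \<le> 1}"
    then obtain h where "h \<in> l2 UNIV" "l2norm h \<le> 1" "q = l2norm (pull b (T (push b X h)))" by auto
    then show "q \<in> {l2norm (T g) |g. g \<in> l2 X \<and> l2norm g \<le> 1}"
      using l2_push sqnorm_push bounded_op_transport(2)[OF T] by (auto simp: l2norm_eq_sqrt_sqnorm)
  next
    fix q assume "q \<in> {l2norm (T g) |g. g \<in> l2 X \<and> l2norm g \<le> 1}"
    then obtain g where g: "g \<in> l2 X" "l2norm g \<le> 1" "q = l2norm (T g)" by auto
    then have "pull b g \<in> l2 UNIV" "l2norm (pull b g) \<le> 1"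
      "q = l2norm (pull b (T (push b X (pull b g))))"
      using l2_pull sqnorm_pull sqnorm_pull[OF T_l2] push_pull
      by (auto simp: l2norm_eq_sqrt_sqnorm)
    then show "q \<in> {l2norm (pull b (T (push b X h))) |h. h \<in> l2 UNIV \<and> l2norm h \<le> 1}" by blast
  qed
  then show ?thesis unfolding opnorm_def by simp
qed

end

text \<open>Transporting \<open>\<pi>\<close> to \<open>l2 (UNIV :: nat set)\<close> along a bijection \<open>\<nat> \<rightarrow> X\<close> makes its norm
  one of the competitors in the supremum defining \<^const>\<open>univ_norm\<close>.\<close>

lemma univ_norm_eq_opnorm:
  fixes \<sigma> :: "'g::ab_group_add \<Rightarrow> 'g \<Rightarrow> complex" and X :: "'x set"
  assumes \<pi>: "star_rep \<sigma> X \<pi>" and X: "countable X" "infinite X" and f: "f \<in> CC"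
    and dominates: "\<And>\<rho>. star_rep \<sigma> (UNIV :: nat set) \<rho> \<Longrightarrow> opnorm UNIV (\<rho> f) \<le> opnorm X (\<pi> f)"
  shows "univ_norm \<sigma> f = opnorm X (\<pi> f)"
  unfolding univ_norm_def
proof (rule cSup_eq_maximum)
  define b where "b = from_nat_into X"
  have b: "bij_betw b UNIV X"
    unfolding b_def using bij_betw_from_nat_into[OF X] .
  have "opnorm UNIV (transport_rep b X \<pi> f) = opnorm X (\<pi> f)"
    using opnorm_transport[OF b star_rep_bounded[OF \<pi> f]] unfolding transport_rep_def .
  then show "opnorm X (\<pi> f) \<in> {opnorm UNIV (\<rho> f) |\<rho>. star_rep \<sigma> (UNIV :: nat set) \<rho>}"
    using star_rep_transport[OF b \<pi>] by force
qed (use dominates in blast)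

section \<open>The lattice \<open>\<Gamma>\<^sub>n\<close> and the representation \<^const>\<open>pi_theta\<close>\<close>

definition lattice_point :: "nat \<Rightarrow> nat \<Rightarrow> int \<times> int \<Rightarrow> rat \<times> rat" where
  "lattice_point p n z = (of_int (fst z) / of_nat p ^ n, of_int (snd z) / of_nat p ^ n)"

lemma Gamma_n_eq_range: "Gamma_n p n = range (lattice_point p n)"
proof (intro set_eqI iffI)
  fix x assume "x \<in> Gamma_n p n"
  then obtain a b where "x = (of_int a / of_nat p ^ n, of_int b / of_nat p ^ n)"
    by (auto simp: Gamma_n_def)
  then show "x \<in> range (lattice_point p n)"
    by (intro range_eqI[of _ _ "(a, b)"]) (simp add: lattice_point_def)
qed (auto simp: Gamma_n_def lattice_point_def)

lemma lattice_point_in_Gamma_n [simp]: "lattice_point p n z \<in> Gamma_n p n"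
  by (simp add: Gamma_n_eq_range)

lemma lattice_point_add: "lattice_point p n (z + w) = lattice_point p n z + lattice_point p n w"
  by (simp add: lattice_point_def add_divide_distrib)

lemma lattice_point_diff: "lattice_point p n (z - w) = lattice_point p n z - lattice_point p n w"
  by (simp add: lattice_point_def diff_divide_distrib)

lemma lattice_point_uminus: "lattice_point p n (- z) = - lattice_point p n z"
  by (simp add: lattice_point_def)

lemma lattice_point_zero [simp]: "lattice_point p n 0 = 0"
  by (simp add: lattice_point_def zero_prod_def)

lemma diff_lattice_point_in_Gamma_n_iff: "x - lattice_point p n z \<in> Gamma_n p n \<longleftrightarrow> x \<in> Gamma_n p n"
proof
  assume "x - lattice_point p n z \<in> Gamma_n p n"
  then obtain w where "x - lattice_point p n z = lattice_point p n w" by (auto simp: Gamma_n_eq_range)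
  then have "x = lattice_point p n (w + z)" by (simp add: lattice_point_add algebra_simps)
  then show "x \<in> Gamma_n p n" by simp
next
  assume "x \<in> Gamma_n p n"
  then obtain w where "x = lattice_point p n w" by (auto simp: Gamma_n_eq_range)
  then have "x - lattice_point p n z = lattice_point p n (w - z)" by (simp add: lattice_point_diff)
  then show "x - lattice_point p n z \<in> Gamma_n p n" by simp
qed

context
  fixes p n :: nat
  assumes p0: "p > 0"
begin

lemma lattice_point_scaled:
  "fst (lattice_point p n z) * of_nat p ^ n = of_int (fst z)"
  "snd (lattice_point p n z) * of_nat p ^ n = of_int (snd z)"
  using p0 by (simp_all add: lattice_point_def)

lemma inj_lattice_point: "inj (lattice_point p n)"
proof (rule injI)
  fix z w assume "lattice_point p n z = lattice_point p n w"
  then have "(of_int (fst z) :: rat) = of_int (fst w)" "(of_int (snd z) :: rat) = of_int (snd w)"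
    using lattice_point_scaled[of z] lattice_point_scaled[of w] by metis+
  then show "z = w" by (simp add: prod_eq_iff)
qed

lemma lattice_point_eq_iff [simp]: "lattice_point p n z = lattice_point p n w \<longleftrightarrow> z = w"
  using inj_lattice_point by (auto dest: injD)

lemma countable_Gamma_n: "countable (Gamma_n p n)"
  by (simp add: Gamma_n_eq_range)

lemma infinite_Gamma_n: "infinite (Gamma_n p n)"
  using finite_imageD[OF _ inj_lattice_point] infinite_UNIV_int
  by (auto simp: Gamma_n_eq_range finite_prod)

end

text \<open>The unitary \<open>\<pi>\<^sub>\<theta>\<^sub>2\<^sub>n(\<delta>\<^sub>z)\<close>: translation by \<open>z / p\<^sup>n\<close> twisted by a phase, which collects the
  cocycle \<open>(\<sigma>\<^sub>\<theta>)\<^sub>n\<close> and the phase \<open>e\<^sup>\<pi>\<^sup>i\<^sup>\<theta>\<^sup>z\<^sup>1\<^sup>z\<^sup>2\<close> built into \<^const>\<open>upsilon\<close>.\<close>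

definition shift_phase :: "nat \<Rightarrow> (nat \<Rightarrow> real) \<Rightarrow> nat \<Rightarrow> int \<times> int \<Rightarrow> rat \<times> rat \<Rightarrow> complex" where
  "shift_phase p \<theta> n z \<gamma> = sigma_n p \<theta> n (lattice_point p n z) (\<gamma> - lattice_point p n z) *
      cis (pi * \<theta> (2 * n) * of_int (fst z) * of_int (snd z))"

definition shift_op :: "nat \<Rightarrow> (nat \<Rightarrow> real) \<Rightarrow> nat \<Rightarrow> int \<times> int \<Rightarrow>
    (rat \<times> rat \<Rightarrow> complex) \<Rightarrow> rat \<times> rat \<Rightarrow> complex" where
  "shift_op p \<theta> n z g = (\<lambda>\<gamma>. shift_phase p \<theta> n z \<gamma> * g (\<gamma> - lattice_point p n z))"

lemma norm_shift_phase [simp]: "cmod (shift_phase p \<theta> n z \<gamma>) = 1"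
  by (simp add: shift_phase_def sigma_n_def norm_mult)

lemma shift_op_add: "shift_op p \<theta> n z (\<lambda>x. g x + h x) = (\<lambda>\<gamma>. shift_op p \<theta> n z g \<gamma> + shift_op p \<theta> n z h \<gamma>)"
  by (simp add: shift_op_def distrib_left)

lemma shift_op_cmult: "shift_op p \<theta> n z (\<lambda>x. c * g x) = (\<lambda>\<gamma>. c * shift_op p \<theta> n z g \<gamma>)"
  by (simp add: shift_op_def mult.left_commute)

lemma shift_op_sum: "shift_op p \<theta> n z (\<lambda>x. \<Sum>w\<in>B. F w x) = (\<lambda>\<gamma>. \<Sum>w\<in>B. shift_op p \<theta> n z (F w) \<gamma>)"
  by (simp add: shift_op_def sum_distrib_left)

context
  fixes p n :: nat and \<theta> :: "nat \<Rightarrow> real"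
  assumes p0: "p > 0"
begin

lemma shift_phase_lattice_point:
  "shift_phase p \<theta> n z (lattice_point p n v) =
    cis (pi * \<theta> (2 * n) * (2 * of_int (fst z) * of_int (snd v) - of_int (fst z) * of_int (snd z)))"
proof -
  have a: "of_rat (fst (lattice_point p n z) * of_nat p ^ n) = (of_int (fst z) :: real)"
    using lattice_point_scaled(1)[OF p0, of n z] by simp
  have b: "of_rat (snd (lattice_point p n v - lattice_point p n z) * of_nat p ^ n)
      = (of_int (snd v) - of_int (snd z) :: real)"
    using lattice_point_scaled(2)[OF p0, of n "v - z"] by (simp add: lattice_point_diff[symmetric] of_rat_diff)
  show ?thesis
    unfolding shift_phase_def sigma_n_def a b cis_mult
    by (rule arg_cong[where f = cis]) (simp add: algebra_simps)
qed

lemma upsilon_lattice_point: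
  "upsilon p \<theta> n f (lattice_point p n z) = cis (pi * \<theta> (2 * n) * of_int (fst z) * of_int (snd z)) * f z"
  by (simp add: upsilon_def lattice_point_scaled[OF p0])

lemma upsilon_support: "{x. upsilon p \<theta> n f x \<noteq> 0} = lattice_point p n ` {z. f z \<noteq> 0}"
proof (intro set_eqI iffI)
  fix x assume x: "x \<in> {x. upsilon p \<theta> n f x \<noteq> 0}"
  then have "x \<in> Gamma_n p n" by (auto simp: upsilon_def split: if_splits)
  then obtain z where "x = lattice_point p n z" by (auto simp: Gamma_n_eq_range)
  then show "x \<in> lattice_point p n ` {z. f z \<noteq> 0}" using x by (auto simp: upsilon_lattice_point)
qed (auto simp: upsilon_lattice_point)

lemma pi_theta_eq_sum_shift_op:
  assumes "finite S" "{z. f z \<noteq> 0} \<subseteq> S"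
  shows "pi_theta p \<theta> n f g = (\<lambda>\<gamma>. \<Sum>z\<in>S. f z * shift_op p \<theta> n z g \<gamma>)"
proof
  fix \<gamma>
  have inj: "inj_on (lattice_point p n) {z. f z \<noteq> 0}"
    using inj_lattice_point[OF p0] by (auto intro: inj_on_subset)
  have "pi_theta p \<theta> n f g \<gamma> = (\<Sum>z\<in>{z. f z \<noteq> 0}. sigma_n p \<theta> n (lattice_point p n z) (\<gamma> - lattice_point p n z) *
          upsilon p \<theta> n f (lattice_point p n z) * g (\<gamma> - lattice_point p n z))"
    unfolding pi_theta_def lambda_tw_def upsilon_support by (rule sum.reindex[OF inj, unfolded comp_def])
  also have "\<dots> = (\<Sum>z\<in>{z. f z \<noteq> 0}. f z * shift_op p \<theta> n z g \<gamma>)"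
    by (rule sum.cong) (simp_all add: upsilon_lattice_point shift_op_def shift_phase_def)
  also have "\<dots> = (\<Sum>z\<in>S. f z * shift_op p \<theta> n z g \<gamma>)"
    by (rule sum.mono_neutral_left) (use assms in auto)
  finally show "pi_theta p \<theta> n f g \<gamma> = (\<Sum>z\<in>S. f z * shift_op p \<theta> n z g \<gamma>)" .
qed

lemma pi_theta_CC:
  "f \<in> CC \<Longrightarrow> pi_theta p \<theta> n f g = (\<lambda>\<gamma>. \<Sum>z\<in>{z. f z \<noteq> 0}. f z * shift_op p \<theta> n z g \<gamma>)"
  by (rule pi_theta_eq_sum_shift_op) (auto simp: CC_def)

lemma pi_theta_delta: "pi_theta p \<theta> n (delta w) = shift_op p \<theta> n w"
  using pi_theta_eq_sum_shift_op[of "{w}" "delta w"] by (auto simp: delta_def)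

lemma shift_op_l2: "g \<in> l2 (Gamma_n p n) \<Longrightarrow> shift_op p \<theta> n z g \<in> l2 (Gamma_n p n)"
  and sqnorm_shift_op: "sqnorm (shift_op p \<theta> n z g) = sqnorm g"
proof -
  show "sqnorm (shift_op p \<theta> n z g) = sqnorm g"
    unfolding shift_op_def by (rule l2_shift(2)) simp
  assume g: "g \<in> l2 (Gamma_n p n)"
  have "shift_op p \<theta> n z g \<in> l2 UNIV"
    unfolding shift_op_def using l2_shift(1)[of "shift_phase p \<theta> n z" g] l2_UNIV[OF g] by simp
  then show "shift_op p \<theta> n z g \<in> l2 (Gamma_n p n)"
    using l2_outside[OF g] diff_lattice_point_in_Gamma_n_iff by (auto simp: l2_iff shift_op_def)
qed

lemma shift_op_0: "shift_op p \<theta> n 0 g = g"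
  by (simp add: shift_op_def shift_phase_def sigma_n_def)

lemma shift_op_shift_op:
  assumes g: "g \<in> l2 (Gamma_n p n)"
  shows "shift_op p \<theta> n z (shift_op p \<theta> n w g) = (\<lambda>\<gamma>. sigma_Z2 (\<theta> (2 * n)) z w * shift_op p \<theta> n (z + w) g \<gamma>)"
proof
  fix \<gamma>
  show "shift_op p \<theta> n z (shift_op p \<theta> n w g) \<gamma> = sigma_Z2 (\<theta> (2 * n)) z w * shift_op p \<theta> n (z + w) g \<gamma>"
  proof (cases "\<gamma> \<in> Gamma_n p n")
    case False
    then have "g (\<gamma> - lattice_point p n z - lattice_point p n w) = 0"
      using l2_outside[OF g] by (simp add: diff_lattice_point_in_Gamma_n_iff)
    then show ?thesis by (simp add: shift_op_def lattice_point_add diff_diff_eq)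
  next
    case True
    then obtain v where v: "\<gamma> = lattice_point p n v" by (auto simp: Gamma_n_eq_range)
    show ?thesis
      unfolding shift_op_def v lattice_point_diff[symmetric] diff_diff_eq[symmetric]
        lattice_point_add[symmetric] shift_phase_lattice_point sigma_Z2_def
      by (simp add: cis_mult algebra_simps)
  qed
qed

lemma shift_op_adjoint:
  assumes h: "h \<in> l2 (Gamma_n p n)"
  shows "l2inner (shift_op p \<theta> n (- z) h) k = l2inner h (shift_op p \<theta> n z k)"
proof -
  define a where "a = lattice_point p n z"
  have "l2inner (shift_op p \<theta> n (- z) h) k = (\<Sum>\<^sub>\<infinity>x. shift_phase p \<theta> n (- z) x * h (x + a) * cnj (k x))"
    unfolding l2inner_def shift_op_def a_def lattice_point_uminus by simp
  also have "\<dots> = (\<Sum>\<^sub>\<infinity>y. shift_phase p \<theta> n (- z) (y - a) * h y * cnj (k (y - a)))"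
    by (rule infsum_reindex_bij_witness[of UNIV "\<lambda>y. y - a" "\<lambda>x. x + a"]) auto
  also have "\<dots> = (\<Sum>\<^sub>\<infinity>y. h y * cnj (shift_phase p \<theta> n z y * k (y - a)))"
  proof (rule infsum_cong)
    fix y
    show "shift_phase p \<theta> n (- z) (y - a) * h y * cnj (k (y - a)) = h y * cnj (shift_phase p \<theta> n z y * k (y - a))"
    proof (cases "y \<in> Gamma_n p n")
      case False
      then show ?thesis using l2_outside[OF h False] by simp
    next
      case True
      then obtain v where v: "y = lattice_point p n v" by (auto simp: Gamma_n_eq_range)
      have "shift_phase p \<theta> n (- z) (y - a) = cnj (shift_phase p \<theta> n z y)"
        unfolding v a_def lattice_point_diff[symmetric] shift_phase_lattice_point cis_cnj
        by (rule arg_cong[where f = cis]) (simp add: algebra_simps)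
      then show ?thesis by (simp add: mult_ac)
    qed
  qed
  also have "\<dots> = l2inner h (shift_op p \<theta> n z k)"
    unfolding l2inner_def shift_op_def a_def ..
  finally show ?thesis .
qed

end

lemma twconv_support_subset:
  assumes "{z. f z \<noteq> 0} \<subseteq> A" "{z. f' z \<noteq> 0} \<subseteq> B"
  shows "{z. twconv \<sigma> f f' z \<noteq> 0} \<subseteq> (\<lambda>(a, b). a + b) ` (A \<times> B)"
proof
  fix u assume "u \<in> {z. twconv \<sigma> f f' z \<noteq> 0}"
  then obtain z where "f z \<noteq> 0" "f' (u - z) \<noteq> 0"
    unfolding twconv_def by (auto elim: sum.not_neutral_contains_not_neutral)
  then show "u \<in> (\<lambda>(a, b). a + b) ` (A \<times> B)"
    using assms by (force intro: image_eqI[of _ _ "(z, u - z)"])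
qed

context
  fixes p n :: nat and \<theta> :: "nat \<Rightarrow> real"
  assumes p0: "p > 0"
begin

lemma l2_sum_shift_op:
  assumes "finite S" "g \<in> l2 (Gamma_n p n)"
  shows "(\<lambda>\<gamma>. \<Sum>z\<in>S. f z * shift_op p \<theta> n z g \<gamma>) \<in> l2 (Gamma_n p n)"
    and "l2norm (\<lambda>\<gamma>. \<Sum>z\<in>S. f z * shift_op p \<theta> n z g \<gamma>) \<le> (\<Sum>z\<in>S. cmod (f z)) * l2norm g"
proof -
  have fU: "(\<lambda>\<gamma>. f z * shift_op p \<theta> n z g \<gamma>) \<in> l2 (Gamma_n p n)" for z
    by (intro l2_cmult shift_op_l2[OF p0 assms(2)])
  show "(\<lambda>\<gamma>. \<Sum>z\<in>S. f z * shift_op p \<theta> n z g \<gamma>) \<in> l2 (Gamma_n p n)"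
    by (rule l2_sum[OF assms(1) fU])
  have "l2norm (\<lambda>\<gamma>. \<Sum>z\<in>S. f z * shift_op p \<theta> n z g \<gamma>) \<le> (\<Sum>z\<in>S. l2norm (\<lambda>\<gamma>. f z * shift_op p \<theta> n z g \<gamma>))"
    by (rule l2norm_sum[OF assms(1) fU])
  also have "\<dots> = (\<Sum>z\<in>S. cmod (f z) * l2norm g)"
    by (simp add: l2norm_cmult l2norm_eq_sqrt_sqnorm sqnorm_shift_op[OF p0])
  finally show "l2norm (\<lambda>\<gamma>. \<Sum>z\<in>S. f z * shift_op p \<theta> n z g \<gamma>) \<le> (\<Sum>z\<in>S. cmod (f z)) * l2norm g"
    by (simp add: sum_distrib_right)
qed

lemma pi_theta_l2: "f \<in> CC \<Longrightarrow> g \<in> l2 (Gamma_n p n) \<Longrightarrow> pi_theta p \<theta> n f g \<in> l2 (Gamma_n p n)"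
  unfolding pi_theta_CC[OF p0] using l2_sum_shift_op(1)[OF CC_finite_support] by blast

lemma bounded_op_pi_theta:
  assumes f: "f \<in> CC" shows "bounded_op (Gamma_n p n) (pi_theta p \<theta> n f)"
  unfolding bounded_op_def pi_theta_CC[OF p0 f]
proof (intro conjI ballI allI)
  fix g assume "g \<in> l2 (Gamma_n p n)"
  then show "(\<lambda>\<gamma>. \<Sum>z\<in>{z. f z \<noteq> 0}. f z * shift_op p \<theta> n z g \<gamma>) \<in> l2 (Gamma_n p n)"
    by (rule l2_sum_shift_op(1)[OF CC_finite_support[OF f]])
next
  show "\<exists>C. \<forall>g\<in>l2 (Gamma_n p n). l2norm (\<lambda>\<gamma>. \<Sum>z\<in>{z. f z \<noteq> 0}. f z * shift_op p \<theta> n z g \<gamma>) \<le> C * l2norm g"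
    using l2_sum_shift_op(2)[OF CC_finite_support[OF f]] by blast
qed (simp_all add: shift_op_add shift_op_cmult distrib_left sum.distrib sum_distrib_left mult.left_commute)

lemma pi_theta_twconv:
  assumes f: "f \<in> CC" and f': "f' \<in> CC" and h: "h \<in> l2 (Gamma_n p n)"
  shows "pi_theta p \<theta> n (twconv (sigma_Z2 (\<theta> (2 * n))) f f') h = pi_theta p \<theta> n f (pi_theta p \<theta> n f' h)"
proof
  fix \<gamma>
  define \<sigma> where "\<sigma> = sigma_Z2 (\<theta> (2 * n))"
  define A where "A = {z. f z \<noteq> 0}"
  define B where "B = {z. f' z \<noteq> 0}"
  define C where "C = (\<lambda>(a, b). a + b) ` (A \<times> B)"
  have fin: "finite A" "finite B" "finite C"
    using f f' by (auto simp: A_def B_def C_def CC_def)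
  define U where "U u = shift_op p \<theta> n u h \<gamma>" for u
  have inner: "(\<Sum>u\<in>C. f z * f' (u - z) * \<sigma> z (u - z) * U u) = (\<Sum>w\<in>B. f z * f' w * \<sigma> z w * U (z + w))"
    if "z \<in> A" for z
  proof -
    have "(\<Sum>u\<in>C. f z * f' (u - z) * \<sigma> z (u - z) * U u) = (\<Sum>u\<in>(\<lambda>w. z + w) ` B. f z * f' (u - z) * \<sigma> z (u - z) * U u)"
    proof (rule sum.mono_neutral_right[OF fin(3)])
      show "(\<lambda>w. z + w) ` B \<subseteq> C" using that by (auto simp: C_def)
      show "\<forall>u\<in>C - (\<lambda>w. z + w) ` B. f z * f' (u - z) * \<sigma> z (u - z) * U u = 0"
      proof
        fix u assume "u \<in> C - (\<lambda>w. z + w) ` B"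
        then have "u - z \<notin> B" by (metis DiffD2 add.commute diff_add_cancel image_eqI)
        then show "f z * f' (u - z) * \<sigma> z (u - z) * U u = 0" by (simp add: B_def)
      qed
    qed
    also have "\<dots> = (\<Sum>w\<in>B. f z * f' w * \<sigma> z w * U (z + w))"
      by (subst sum.reindex) (auto intro: inj_onI)
    finally show ?thesis .
  qed
  have "{z. twconv \<sigma> f f' z \<noteq> 0} \<subseteq> C"
    unfolding C_def by (rule twconv_support_subset) (auto simp: A_def B_def)
  then have "pi_theta p \<theta> n (twconv \<sigma> f f') h \<gamma> = (\<Sum>u\<in>C. twconv \<sigma> f f' u * U u)"
    by (simp add: pi_theta_eq_sum_shift_op[OF p0 fin(3)] U_def)
  also have "\<dots> = (\<Sum>z\<in>A. \<Sum>u\<in>C. f z * f' (u - z) * \<sigma> z (u - z) * U u)"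
    unfolding twconv_def A_def[symmetric] sum_distrib_right by (rule sum.swap)
  also have "\<dots> = (\<Sum>z\<in>A. \<Sum>w\<in>B. f z * f' w * \<sigma> z w * U (z + w))"
    using inner by simp
  also have "\<dots> = (\<Sum>z\<in>A. f z * shift_op p \<theta> n z (\<lambda>x. \<Sum>w\<in>B. f' w * shift_op p \<theta> n w h x) \<gamma>)"
    by (simp add: shift_op_sum shift_op_cmult shift_op_shift_op[OF p0 h] sum_distrib_left U_def \<sigma>_def mult_ac)
  also have "\<dots> = pi_theta p \<theta> n f (pi_theta p \<theta> n f' h) \<gamma>"
    by (simp add: pi_theta_CC[OF p0 f] pi_theta_CC[OF p0 f'] A_def B_def)
  finally show "pi_theta p \<theta> n (twconv (sigma_Z2 (\<theta> (2 * n))) f f') h \<gamma> = pi_theta p \<theta> n f (pi_theta p \<theta> n f' h) \<gamma>"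
    by (simp add: \<sigma>_def)
qed

lemma pi_theta_twinv:
  assumes f: "f \<in> CC" and h: "h \<in> l2 (Gamma_n p n)" and k: "k \<in> l2 (Gamma_n p n)"
  shows "l2inner (pi_theta p \<theta> n (twinv (sigma_Z2 (\<theta> (2 * n))) f) h) k = l2inner h (pi_theta p \<theta> n f k)"
proof -
  define A where "A = {z. f z \<noteq> 0}"
  have fA: "finite A" using f by (simp add: A_def CC_def)
  have U: "(\<lambda>\<gamma>. c * shift_op p \<theta> n w g \<gamma>) \<in> l2 (Gamma_n p n)" if "g \<in> l2 (Gamma_n p n)" for c w g
    by (intro l2_cmult shift_op_l2[OF p0 that])
  have "pi_theta p \<theta> n (twinv (sigma_Z2 (\<theta> (2 * n))) f) h
      = (\<lambda>\<gamma>. \<Sum>u\<in>uminus ` A. cnj (f (- u)) * shift_op p \<theta> n u h \<gamma>)"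
    unfolding twinv_sigma_Z2
    by (rule pi_theta_eq_sum_shift_op[OF p0]) (use fA in \<open>auto simp: A_def image_iff\<close>, force)
  also have "\<dots> = (\<lambda>\<gamma>. \<Sum>z\<in>A. cnj (f z) * shift_op p \<theta> n (- z) h \<gamma>)"
    by (subst sum.reindex) (auto intro: inj_onI)
  finally have "l2inner (pi_theta p \<theta> n (twinv (sigma_Z2 (\<theta> (2 * n))) f) h) k
      = (\<Sum>z\<in>A. l2inner (\<lambda>\<gamma>. cnj (f z) * shift_op p \<theta> n (- z) h \<gamma>) k)"
    using l2inner_sum_left[OF fA U[OF h] k] by simp
  also have "\<dots> = (\<Sum>z\<in>A. l2inner h (\<lambda>\<gamma>. f z * shift_op p \<theta> n z k \<gamma>))"
    by (simp add: l2inner_cmult_left l2inner_cmult_right shift_op_adjoint[OF p0 h])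
  also have "\<dots> = l2inner h (pi_theta p \<theta> n f k)"
    using l2inner_sum_right[OF fA U[OF k] h] by (simp add: pi_theta_CC[OF p0 f] A_def)
  finally show ?thesis .
qed

lemma star_rep_pi_theta: "star_rep (sigma_Z2 (\<theta> (2 * n))) (Gamma_n p n) (pi_theta p \<theta> n)"
  unfolding star_rep_def
proof (intro conjI ballI allI)
  fix f f' :: "int \<times> int \<Rightarrow> complex" and h assume f: "f \<in> CC" "f' \<in> CC"
  define S where "S = {z. f z \<noteq> 0} \<union> {z. f' z \<noteq> 0}"
  have S: "finite S" using f by (simp add: S_def CC_def)
  have "{z. f z + f' z \<noteq> 0} \<subseteq> S" "{z. f z \<noteq> 0} \<subseteq> S" "{z. f' z \<noteq> 0} \<subseteq> S"
    by (auto simp: S_def)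
  from this[THEN pi_theta_eq_sum_shift_op[OF p0 S]]
  show "pi_theta p \<theta> n (\<lambda>\<gamma>. f \<gamma> + f' \<gamma>) h = (\<lambda>x. pi_theta p \<theta> n f h x + pi_theta p \<theta> n f' h x)"
    by (simp add: distrib_right sum.distrib)
next
  fix f :: "int \<times> int \<Rightarrow> complex" and c h assume f: "f \<in> CC"
  show "pi_theta p \<theta> n (\<lambda>\<gamma>. c * f \<gamma>) h = (\<lambda>x. c * pi_theta p \<theta> n f h x)"
    using pi_theta_eq_sum_shift_op[OF p0 CC_finite_support[OF f], of "\<lambda>\<gamma>. c * f \<gamma>"] pi_theta_CC[OF p0 f]
    by (auto simp: sum_distrib_left mult.assoc)
next
  fix h assume "h \<in> l2 (Gamma_n p n)"
  show "pi_theta p \<theta> n (delta 0) h = h" by (simp add: pi_theta_delta[OF p0] shift_op_0[OF p0])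
qed (simp_all add: bounded_op_pi_theta pi_theta_twconv pi_theta_twinv)

end

section \<open>The norm of \<^const>\<open>pi_theta\<close> is the universal norm\<close>

lemma has_sum_finite_sum:
  fixes G :: "'i \<Rightarrow> 'k \<Rightarrow> 'a::topological_comm_monoid_add"
  assumes "finite S" "\<And>y. y \<in> S \<Longrightarrow> (G y has_sum s y) A"
  shows "((\<lambda>k. \<Sum>y\<in>S. G y k) has_sum (\<Sum>y\<in>S. s y)) A"
  using assms by (induction S rule: finite_induct) (auto intro: has_sum_add)

definition folner_vector :: "nat \<Rightarrow> (nat \<Rightarrow> real) \<Rightarrow> nat \<Rightarrow>
    ((int \<times> int \<Rightarrow> complex) \<Rightarrow> ('k \<Rightarrow> complex) \<Rightarrow> 'k \<Rightarrow> complex) \<Rightarrow>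
    ('k \<Rightarrow> complex) \<Rightarrow> (int \<times> int) set \<Rightarrow> 'k \<Rightarrow> rat \<times> rat \<Rightarrow> complex" where
  "folner_vector p \<theta> n \<rho> \<xi> F k = (\<lambda>\<gamma>. \<Sum>x\<in>F. if \<gamma> = lattice_point p n x
      then cis (pi * \<theta> (2 * n) * of_int (fst x) * of_int (snd x)) * \<rho> (delta (- x)) \<xi> k else 0)"

definition square_box :: "int \<Rightarrow> (int \<times> int) set" where
  "square_box m = {-m..m} \<times> {-m..m}"

lemma finite_square_box [simp]: "finite (square_box m)"
  by (simp add: square_box_def)

lemma card_square_box: "m \<ge> 0 \<Longrightarrow> real (card (square_box m)) = (2 * real_of_int m + 1)\<^sup>2"
  by (simp add: square_box_def card_cartesian_product power2_eq_square)

context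
  fixes p n :: nat and \<theta> :: "nat \<Rightarrow> real" and \<rho> and \<xi> :: "nat \<Rightarrow> complex"
  assumes p0: "p > 0"
    and \<rho>: "star_rep (sigma_Z2 (\<theta> (2 * n))) (UNIV :: nat set) \<rho>"
    and \<xi>: "\<xi> \<in> l2 (UNIV :: nat set)"
begin

lemma folner_vector_lattice_point:
  "finite F \<Longrightarrow> folner_vector p \<theta> n \<rho> \<xi> F k (lattice_point p n y) =
    (if y \<in> F then cis (pi * \<theta> (2 * n) * of_int (fst y) * of_int (snd y)) * \<rho> (delta (- y)) \<xi> k else 0)"
  by (simp add: folner_vector_def lattice_point_eq_iff[OF p0] sum.delta')

lemma folner_vector_outside: "\<gamma> \<notin> lattice_point p n ` F \<Longrightarrow> folner_vector p \<theta> n \<rho> \<xi> F k \<gamma> = 0"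
  by (auto simp: folner_vector_def intro!: sum.neutral)

lemma
  assumes F: "finite F"
  shows l2_folner_vector: "folner_vector p \<theta> n \<rho> \<xi> F k \<in> l2 (Gamma_n p n)"
    and sqnorm_folner_vector: "sqnorm (folner_vector p \<theta> n \<rho> \<xi> F k) = (\<Sum>x\<in>F. (cmod (\<rho> (delta (- x)) \<xi> k))\<^sup>2)"
proof -
  show "folner_vector p \<theta> n \<rho> \<xi> F k \<in> l2 (Gamma_n p n)"
    by (rule l2_finite_support[of "lattice_point p n ` F"]) (use F folner_vector_outside in auto)
  have inj: "inj_on (lattice_point p n) F"
    using inj_lattice_point[OF p0] by (auto intro: inj_on_subset)
  have "sqnorm (folner_vector p \<theta> n \<rho> \<xi> F k)
      = (\<Sum>\<gamma>\<in>lattice_point p n ` F. (cmod (folner_vector p \<theta> n \<rho> \<xi> F k \<gamma>))\<^sup>2)"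
    by (rule sqnorm_finite_support) (use F folner_vector_outside in auto)
  also have "\<dots> = (\<Sum>x\<in>F. (cmod (\<rho> (delta (- x)) \<xi> k))\<^sup>2)"
    by (simp add: sum.reindex[OF inj] folner_vector_lattice_point[OF F] norm_mult)
  finally show "sqnorm (folner_vector p \<theta> n \<rho> \<xi> F k) = (\<Sum>x\<in>F. (cmod (\<rho> (delta (- x)) \<xi> k))\<^sup>2)" .
qed

lemma star_rep_delta_expand:
  assumes f: "f \<in> CC"
  shows "\<rho> (delta (- y)) (\<rho> f \<xi>) = (\<lambda>k. \<Sum>z\<in>{z. f z \<noteq> 0}.
           f z * sigma_Z2 (\<theta> (2 * n)) (- y) z * \<rho> (delta (- y + z)) \<xi> k)"
proof -
  define A where "A = {z. f z \<noteq> 0}"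
  have fA: "finite A" using f by (simp add: A_def CC_def)
  have l2: "(\<lambda>x. f z * \<rho> (delta z) \<xi> x) \<in> l2 UNIV" for z
    by (rule l2_cmult, rule star_rep_l2[OF \<rho> delta_CC \<xi>])
  have "\<rho> (delta (- y)) (\<rho> f \<xi>) = \<rho> (delta (- y)) (\<lambda>k. \<Sum>z\<in>A. f z * \<rho> (delta z) \<xi> k)"
    using star_rep_eq_sum_delta[OF \<rho> f \<xi>] by (simp add: A_def)
  also have "\<dots> = (\<lambda>k. \<Sum>z\<in>A. \<rho> (delta (- y)) (\<lambda>x. f z * \<rho> (delta z) \<xi> x) k)"
    by (rule star_rep_sum_right[OF \<rho> delta_CC fA l2])
  also have "\<dots> = (\<lambda>k. \<Sum>z\<in>A. f z * sigma_Z2 (\<theta> (2 * n)) (- y) z * \<rho> (delta (- y + z)) \<xi> k)"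
    by (simp add: star_rep_cmult_right[OF \<rho> delta_CC star_rep_l2[OF \<rho> delta_CC \<xi>]]
        star_rep_delta_delta[OF \<rho> \<xi>] mult_ac)
  finally show ?thesis by (simp add: A_def)
qed

lemma pi_theta_folner_vector:
  assumes f: "f \<in> CC" and F: "finite F" and yF: "\<And>z. f z \<noteq> 0 \<Longrightarrow> y - z \<in> F"
  shows "pi_theta p \<theta> n f (folner_vector p \<theta> n \<rho> \<xi> F k) (lattice_point p n y)
       = cis (pi * \<theta> (2 * n) * of_int (fst y) * of_int (snd y)) * \<rho> (delta (- y)) (\<rho> f \<xi>) k"
proof -
  define t where "t = \<theta> (2 * n)"
  have "f z * shift_op p \<theta> n z (folner_vector p \<theta> n \<rho> \<xi> F k) (lattice_point p n y) =
      cis (pi * t * of_int (fst y) * of_int (snd y)) * (f z * sigma_Z2 t (- y) z * \<rho> (delta (- y + z)) \<xi> k)"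
    if "f z \<noteq> 0" for z
  proof -
    have phase: "shift_phase p \<theta> n z (lattice_point p n y) * cis (pi * t * of_int (fst (y - z)) * of_int (snd (y - z)))
       = cis (pi * t * of_int (fst y) * of_int (snd y)) * sigma_Z2 t (- y) z"
      unfolding shift_phase_lattice_point[OF p0] sigma_Z2_def cis_mult t_def
      by (rule arg_cong[where f = cis]) (simp add: algebra_simps)
    show ?thesis
      unfolding shift_op_def lattice_point_diff[symmetric] folner_vector_lattice_point[OF F]
      using yF[OF that] phase by (simp add: t_def mult_ac)
  qed
  then have "pi_theta p \<theta> n f (folner_vector p \<theta> n \<rho> \<xi> F k) (lattice_point p n y)
      = (\<Sum>z\<in>{z. f z \<noteq> 0}. cis (pi * t * of_int (fst y) * of_int (snd y)) *
           (f z * sigma_Z2 t (- y) z * \<rho> (delta (- y + z)) \<xi> k))"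
    unfolding pi_theta_CC[OF p0 f] by (intro sum.cong) auto
  also have "\<dots> = cis (pi * t * of_int (fst y) * of_int (snd y)) * \<rho> (delta (- y)) (\<rho> f \<xi>) k"
    by (simp add: star_rep_delta_expand[OF f] sum_distrib_left t_def)
  finally show ?thesis by (simp add: t_def)
qed

lemma sqnorm_pi_theta_folner_vector_le:
  assumes f: "f \<in> CC" and F: "finite F"
  shows "sqnorm (pi_theta p \<theta> n f (folner_vector p \<theta> n \<rho> \<xi> F k))
    \<le> (opnorm (Gamma_n p n) (pi_theta p \<theta> n f))\<^sup>2 * (\<Sum>x\<in>F. (cmod (\<rho> (delta (- x)) \<xi> k))\<^sup>2)"
proof -
  have "l2norm (pi_theta p \<theta> n f (folner_vector p \<theta> n \<rho> \<xi> F k))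
      \<le> opnorm (Gamma_n p n) (pi_theta p \<theta> n f) * l2norm (folner_vector p \<theta> n \<rho> \<xi> F k)"
    by (rule opnorm_bound[OF bounded_op_pi_theta[OF p0 f] l2_folner_vector[OF F]])
  then have "(l2norm (pi_theta p \<theta> n f (folner_vector p \<theta> n \<rho> \<xi> F k)))\<^sup>2
      \<le> (opnorm (Gamma_n p n) (pi_theta p \<theta> n f) * l2norm (folner_vector p \<theta> n \<rho> \<xi> F k))\<^sup>2"
    by (intro power_mono) (simp_all add: l2norm_nonneg)
  then show ?thesis
    by (simp add: l2norm_power2 power_mult_distrib sqnorm_folner_vector[OF F])
qed

lemma sum_translates_le_sqnorm_pi_theta_folner_vector:
  assumes f: "f \<in> CC" and F: "finite F" "finite F'"
    and sub: "\<And>y z. y \<in> F' \<Longrightarrow> f z \<noteq> 0 \<Longrightarrow> y - z \<in> F"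
  shows "(\<Sum>y\<in>F'. (cmod (\<rho> (delta (- y)) (\<rho> f \<xi>) k))\<^sup>2)
    \<le> sqnorm (pi_theta p \<theta> n f (folner_vector p \<theta> n \<rho> \<xi> F k))"
proof -
  define c where "c = folner_vector p \<theta> n \<rho> \<xi> F k"
  have inj: "inj_on (lattice_point p n) F'"
    using inj_lattice_point[OF p0] by (auto intro: inj_on_subset)
  have "(\<Sum>y\<in>F'. (cmod (\<rho> (delta (- y)) (\<rho> f \<xi>) k))\<^sup>2)
      = (\<Sum>\<gamma>\<in>lattice_point p n ` F'. (cmod (pi_theta p \<theta> n f c \<gamma>))\<^sup>2)"
    using sub by (simp add: sum.reindex[OF inj] c_def pi_theta_folner_vector[OF f F(1)] norm_mult)
  also have "\<dots> \<le> sqnorm (pi_theta p \<theta> n f c)"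
    unfolding sqnorm_def
    by (rule finite_sum_le_infsum) (use l2_summable[OF pi_theta_l2[OF p0 f l2_folner_vector[OF F(1)]]] F(2) in
        \<open>auto simp: c_def\<close>)
  finally show ?thesis unfolding c_def .
qed

lemma folner_inequality:
  assumes f: "f \<in> CC" and F: "finite F" "finite F'"
    and sub: "\<And>y z. y \<in> F' \<Longrightarrow> f z \<noteq> 0 \<Longrightarrow> y - z \<in> F"
  shows "card F' * sqnorm (\<rho> f \<xi>) \<le> (opnorm (Gamma_n p n) (pi_theta p \<theta> n f))\<^sup>2 * (card F * sqnorm \<xi>)"
proof -
  define H where "H k = sqnorm (pi_theta p \<theta> n f (folner_vector p \<theta> n \<rho> \<xi> F k))" for k
  have \<rho>f: "\<rho> f \<xi> \<in> l2 UNIV" by (rule star_rep_l2[OF \<rho> f \<xi>])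
  have lower: "((\<lambda>k. \<Sum>y\<in>F'. (cmod (\<rho> (delta (- y)) (\<rho> f \<xi>) k))\<^sup>2) has_sum card F' * sqnorm (\<rho> f \<xi>)) UNIV"
    using has_sum_finite_sum[OF F(2) has_sum_sqnorm[OF star_rep_l2[OF \<rho> delta_CC \<rho>f]]]
    by (simp add: sqnorm_star_rep_delta[OF \<rho> \<rho>f])
  have upper: "((\<lambda>k. (opnorm (Gamma_n p n) (pi_theta p \<theta> n f))\<^sup>2 * (\<Sum>x\<in>F. (cmod (\<rho> (delta (- x)) \<xi> k))\<^sup>2))
      has_sum (opnorm (Gamma_n p n) (pi_theta p \<theta> n f))\<^sup>2 * (card F * sqnorm \<xi>)) UNIV"
    using has_sum_cmult_right[OF has_sum_finite_sum[OF F(1) has_sum_sqnorm[OF star_rep_l2[OF \<rho> delta_CC \<xi>]]]]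
    by (simp add: sqnorm_star_rep_delta[OF \<rho> \<xi>])
  have H: "H summable_on UNIV"
    by (rule summable_on_comparison_test[OF has_sum_imp_summable[OF upper]])
       (simp_all add: H_def sqnorm_nonneg sqnorm_pi_theta_folner_vector_le[OF f F(1)])
  have "card F' * sqnorm (\<rho> f \<xi>) \<le> infsum H UNIV"
    by (rule has_sum_mono[OF lower has_sum_infsum[OF H]])
       (simp add: H_def sum_translates_le_sqnorm_pi_theta_folner_vector[OF f F sub])
  also have "\<dots> \<le> (opnorm (Gamma_n p n) (pi_theta p \<theta> n f))\<^sup>2 * (card F * sqnorm \<xi>)"
    by (rule has_sum_mono[OF has_sum_infsum[OF H] upper])
       (simp add: H_def sqnorm_pi_theta_folner_vector_le[OF f F(1)])
  finally show ?thesis .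
qed

end

lemma opnorm_star_rep_le_pi_theta:
  assumes p0: "p > 0" and \<rho>: "star_rep (sigma_Z2 (\<theta> (2 * n))) (UNIV :: nat set) \<rho>" and f: "f \<in> CC"
  shows "opnorm (UNIV :: nat set) (\<rho> f) \<le> opnorm (Gamma_n p n) (pi_theta p \<theta> n f)"
proof (rule opnorm_le)
  define P where "P = opnorm (Gamma_n p n) (pi_theta p \<theta> n f)"
  show P0: "opnorm (Gamma_n p n) (pi_theta p \<theta> n f) \<ge> 0"
    by (rule opnorm_nonneg[OF bounded_op_pi_theta[OF p0 f]])
  fix \<xi> :: "nat \<Rightarrow> complex" assume \<xi>: "\<xi> \<in> l2 UNIV"
  define R where "R = (\<Sum>z\<in>{z. f z \<noteq> 0}. \<bar>fst z\<bar> + \<bar>snd z\<bar>)"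
  have R: "\<bar>fst z\<bar> \<le> R \<and> \<bar>snd z\<bar> \<le> R" if "f z \<noteq> 0" for z
    using member_le_sum[of z "{z. f z \<noteq> 0}" "\<lambda>z. \<bar>fst z\<bar> + \<bar>snd z\<bar>"] CC_finite_support[OF f] that
    by (auto simp: R_def)
  then have R0: "R \<ge> 0" unfolding R_def by (intro sum_nonneg) auto
  define a where "a = sqnorm (\<rho> f \<xi>)"
  define b where "b = sqnorm \<xi>"
  define q where "q m = (2 * (R + real m) + 1) / (2 * real m + 1)" for m :: nat
  have le: "a \<le> P\<^sup>2 * b * (q m)\<^sup>2" for m
  proof -
    have pos: "0 < 2 * real m + 1" using of_nat_0_le_iff[of m] by linarith
    have "y - z \<in> square_box (R + int m)" if "y \<in> square_box (int m)" "f z \<noteq> 0" for y z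
      using that R[of z] by (cases y, cases z) (simp add: square_box_def abs_le_iff)
    then have "card (square_box (int m)) * a \<le> P\<^sup>2 * (card (square_box (R + int m)) * b)"
      unfolding a_def b_def P_def
      by (rule folner_inequality[where \<theta> = \<theta> and n = n, OF p0 \<rho> \<xi> f finite_square_box finite_square_box])
    then have "(2 * real m + 1)\<^sup>2 * a \<le> P\<^sup>2 * b * (2 * (R + real m) + 1)\<^sup>2"
      using R0 by (simp add: card_square_box mult_ac)
    also have "\<dots> = (2 * real m + 1)\<^sup>2 * (P\<^sup>2 * b * (q m)\<^sup>2)"
      using pos by (simp add: q_def power_divide)
    finally show ?thesis
      by (rule mult_left_le_imp_le) (use pos in simp)
  qed
  have "q \<longlonglongrightarrow> 1"
    unfolding q_def by real_asymp
  then have "(\<lambda>m. P\<^sup>2 * b * (q m)\<^sup>2) \<longlonglongrightarrow> P\<^sup>2 * b * 1\<^sup>2"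
    by (intro tendsto_mult_left tendsto_power)
  then have "a \<le> P\<^sup>2 * b"
    using le by (simp add: LIMSEQ_le_const)
  then have "sqrt a \<le> sqrt (P\<^sup>2 * b)"
    by (rule real_sqrt_le_mono)
  then show "l2norm (\<rho> f \<xi>) \<le> opnorm (Gamma_n p n) (pi_theta p \<theta> n f) * l2norm \<xi>"
    using P0 by (simp add: l2norm_eq_sqrt_sqnorm a_def b_def P_def real_sqrt_mult)
qed

section \<open>The Dirac operator\<close>

lemma padic_abs_nonneg: "padic_abs p r \<ge> 0"
  by (auto simp: padic_abs_def split: prod.splits)

lemma padic_abs_divide_power_le:
  assumes p: "prime p"
  shows "padic_abs p (of_int a / of_nat p ^ n) \<le> real p ^ n"
proof (cases "of_int a / (of_nat p ^ n :: rat) = 0")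
  case True
  then show ?thesis by (simp add: padic_abs_def)
next
  case False
  define r where "r = of_int a / (of_nat p ^ n :: rat)"
  obtain a' b' where q: "quotient_of r = (a', b')" by (cases "quotient_of r")
  have p0: "p > 0" using p prime_gt_0_nat by blast
  have "of_int a' / of_int b' = (of_int a / of_int (int p ^ n) :: rat)"
    using quotient_of_div[OF q] by (simp add: r_def)
  then have "of_int a' * of_int (int p ^ n) = (of_int a * of_int b' :: rat)"
    using quotient_of_denom_pos[OF q] p0 by (simp add: field_simps)
  then have "a' * int p ^ n = a * b'"
    by (metis of_int_eq_iff of_int_mult)
  then have "b' dvd a' * int p ^ n" by simp
  then have "b' dvd int p ^ n"
    using quotient_of_coprime[OF q] by (simp add: coprime_dvd_mult_right_iff coprime_commute)
  then have "multiplicity (int p) b' \<le> multiplicity (int p) (int p ^ n)"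
    by (rule dvd_imp_multiplicity_le) (use p0 in simp)
  then have "multiplicity (int p) b' \<le> n"
    using p by simp
  then have "padic_abs p r \<le> real p powr (real n)"
    using False q p0 by (auto simp: padic_abs_def r_def intro!: powr_mono)
  then show ?thesis using p0 by (simp add: r_def powr_realpow)
qed

lemma padic_abs_Gamma_n:
  assumes "prime p" "x \<in> Gamma_n p n"
  shows "padic_abs p (fst x) \<le> real p ^ n" "padic_abs p (snd x) \<le> real p ^ n"
  using assms padic_abs_divide_power_le[OF assms(1)] by (auto simp: Gamma_n_def)

lemma LSigma_ge_abs: "LSigma p x \<ge> \<bar>of_rat (fst x)\<bar> + \<bar>of_rat (snd x)\<bar>"
  using padic_abs_nonneg[of p "fst x"] padic_abs_nonneg[of p "snd x"] by (simp add: LSigma_def Lp_def)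

lemma abs_of_rat_lattice_point_le:
  assumes "p > 0"
  shows "\<bar>of_rat (fst (lattice_point p n z)) :: real\<bar> \<le> of_int \<bar>fst z\<bar>"
    and "\<bar>of_rat (snd (lattice_point p n z)) :: real\<bar> \<le> of_int \<bar>snd z\<bar>"
proof -
  have "(1 :: real) \<le> of_nat p ^ n" using assms by (simp add: one_le_power)
  then show "\<bar>of_rat (fst (lattice_point p n z)) :: real\<bar> \<le> of_int \<bar>fst z\<bar>"
    and "\<bar>of_rat (snd (lattice_point p n z)) :: real\<bar> \<le> of_int \<bar>snd z\<bar>"
    by (simp_all add: lattice_point_def of_rat_divide abs_divide divide_le_eq mult_le_cancel_left1)
qed

text \<open>The Archimedean part of \<^const>\<open>LSigma\<close> is Lipschitz and its \<open>p\<close>-adic part is bounded by \<open>p\<^sup>n\<close>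
  on \<open>\<Gamma>\<^sub>n\<close>, so a translation by a fixed lattice point changes \<^const>\<open>LSigma\<close> by a bounded amount.\<close>

lemma LSigma_diff_le:
  assumes p: "prime p" and x: "x \<in> Gamma_n p n"
  shows "\<bar>LSigma p x - LSigma p (x - lattice_point p n z)\<bar> \<le> real_of_int (\<bar>fst z\<bar> + \<bar>snd z\<bar>) + 2 * real p ^ n"
proof -
  have p0: "p > 0" using p prime_gt_0_nat by blast
  have x': "x - lattice_point p n z \<in> Gamma_n p n" using x by (simp add: diff_lattice_point_in_Gamma_n_iff)
  note pa = padic_abs_Gamma_n[OF p x] padic_abs_Gamma_n[OF p x']
    padic_abs_nonneg[of p "fst x"] padic_abs_nonneg[of p "snd x"]
    padic_abs_nonneg[of p "fst (x - lattice_point p n z)"] padic_abs_nonneg[of p "snd (x - lattice_point p n z)"]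
  have triangle: "\<bar>\<bar>a\<bar> - \<bar>a - c\<bar>\<bar> \<le> \<bar>c\<bar>" for a c :: real by arith
  have d: "\<bar>\<bar>of_rat (fst x)\<bar> - \<bar>of_rat (fst (x - lattice_point p n z))\<bar>\<bar> \<le> \<bar>of_rat (fst (lattice_point p n z)) :: real\<bar>"
    "\<bar>\<bar>of_rat (snd x)\<bar> - \<bar>of_rat (snd (x - lattice_point p n z))\<bar>\<bar> \<le> \<bar>of_rat (snd (lattice_point p n z)) :: real\<bar>"
    using triangle[of "of_rat (fst x)" "of_rat (fst (lattice_point p n z))"]
      triangle[of "of_rat (snd x)" "of_rat (snd (lattice_point p n z))"]
    by (simp_all only: fst_diff snd_diff of_rat_diff)
  have combine: "\<bar>(u1 + P1) + (v1 + Q1) - ((u2 + P2) + (v2 + Q2))\<bar> \<le> c1 + c2 + 2 * M"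
    if "\<bar>u1 - u2\<bar> \<le> c1" "\<bar>v1 - v2\<bar> \<le> c2" "0 \<le> P1" "P1 \<le> M" "0 \<le> P2" "P2 \<le> M"
      "0 \<le> Q1" "Q1 \<le> M" "0 \<le> Q2" "Q2 \<le> M" for u1 u2 v1 v2 P1 P2 Q1 Q2 c1 c2 M :: real
    using that by arith
  have "\<bar>LSigma p x - LSigma p (x - lattice_point p n z)\<bar>
      \<le> \<bar>of_rat (fst (lattice_point p n z))\<bar> + \<bar>of_rat (snd (lattice_point p n z))\<bar> + 2 * real p ^ n"
    unfolding LSigma_def Lp_def by (rule combine[OF d pa(5) pa(1) pa(7) pa(3) pa(6) pa(2) pa(8) pa(4)])
  then show ?thesis
    using abs_of_rat_lattice_point_le[OF p0, of n z] by simp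
qed

lemma LSigma_sublevel_finite:
  assumes p0: "p > 0"
  shows "finite {x \<in> Gamma_n p n. LSigma p x \<le> M}"
proof -
  define N :: real where "N = real p ^ n"
  have N1: "N \<ge> 1" using p0 by (simp add: N_def one_le_power)
  define B where "B = \<lceil>M * N\<rceil>"
  have "{x \<in> Gamma_n p n. LSigma p x \<le> M} \<subseteq> lattice_point p n ` ({-B..B} \<times> {-B..B})"
  proof
    fix x assume x: "x \<in> {x \<in> Gamma_n p n. LSigma p x \<le> M}"
    then obtain v where v: "x = lattice_point p n v" by (auto simp: Gamma_n_eq_range)
    have "\<bar>of_rat (fst x)\<bar> = \<bar>of_int (fst v)\<bar> / N" "\<bar>of_rat (snd x)\<bar> = \<bar>of_int (snd v)\<bar> / N"
      using N1 by (simp_all add: v lattice_point_def of_rat_divide of_rat_power abs_divide N_def)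
    then have "\<bar>of_int (fst v)\<bar> / N + \<bar>of_int (snd v)\<bar> / N \<le> M"
      using LSigma_ge_abs[where p = p and x = x] x by simp
    then have "\<bar>of_int (fst v)\<bar> \<le> M * N" "\<bar>of_int (snd v)\<bar> \<le> M * N"
      using N1 by (simp_all add: field_simps add_nonneg_nonneg add_increasing add_increasing2)
    then have "\<bar>fst v\<bar> \<le> B" "\<bar>snd v\<bar> \<le> B"
      unfolding B_def by linarith+
    then have "v \<in> {-B..B} \<times> {-B..B}" by (cases v) auto
    then show "x \<in> lattice_point p n ` ({-B..B} \<times> {-B..B})"
      using v by blast
  qed
  then show ?thesis by (rule finite_subset) simp
qed

context
  fixes p n :: nat and \<theta> :: "nat \<Rightarrow> real"
  assumes p: "prime p"
begin

lemma pi_theta_commutator_eq_sum: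
  assumes f: "f \<in> CC"
  shows "(\<lambda>x. mult_op (LSigma p) (pi_theta p \<theta> n f g) x - pi_theta p \<theta> n f (mult_op (LSigma p) g) x)
    = (\<lambda>x. \<Sum>z\<in>{z. f z \<noteq> 0}. f z *
         (complex_of_real (LSigma p x - LSigma p (x - lattice_point p n z)) * shift_op p \<theta> n z g x))"
  using p prime_gt_0_nat
  by (simp add: pi_theta_CC f mult_op_def shift_op_def sum_distrib_left sum_subtractf[symmetric] algebra_simps)

lemma commutator_term_l2:
  fixes z :: "int \<times> int"
  assumes g: "g \<in> l2 (Gamma_n p n)"
  defines "W \<equiv> (\<lambda>x. complex_of_real (LSigma p x - LSigma p (x - lattice_point p n z)) * shift_op p \<theta> n z g x)"
  shows "W \<in> l2 (Gamma_n p n)" "l2norm W \<le> (real_of_int (\<bar>fst z\<bar> + \<bar>snd z\<bar>) + 2 * real p ^ n) * l2norm g"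
proof -
  have p0: "p > 0" using p prime_gt_0_nat by blast
  have U: "shift_op p \<theta> n z g \<in> l2 (Gamma_n p n)" by (rule shift_op_l2[OF p0 g])
  have bound: "cmod (W x) \<le> (real_of_int (\<bar>fst z\<bar> + \<bar>snd z\<bar>) + 2 * real p ^ n) * cmod (shift_op p \<theta> n z g x)" for x
  proof (cases "x \<in> Gamma_n p n")
    case True
    then show ?thesis
      unfolding W_def norm_mult norm_of_real by (intro mult_right_mono LSigma_diff_le[OF p True]) auto
  next
    case False
    then show ?thesis using l2_outside[OF U False] by (simp add: W_def)
  qed
  show "W \<in> l2 (Gamma_n p n)" by (rule l2_dominated(1)[OF U bound])
  show "l2norm W \<le> (real_of_int (\<bar>fst z\<bar> + \<bar>snd z\<bar>) + 2 * real p ^ n) * l2norm g"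
    using l2norm_dominated[OF U bound] sqnorm_shift_op[OF p0] by (simp add: l2norm_eq_sqrt_sqnorm)
qed

lemma pi_theta_commutator_bounded:
  assumes f: "f \<in> CC" and g: "g \<in> mult_dom (Gamma_n p n) (LSigma p)"
  shows "pi_theta p \<theta> n f g \<in> mult_dom (Gamma_n p n) (LSigma p)"
    and "l2norm (\<lambda>x. mult_op (LSigma p) (pi_theta p \<theta> n f g) x - pi_theta p \<theta> n f (mult_op (LSigma p) g) x)
      \<le> (\<Sum>z\<in>{z. f z \<noteq> 0}. cmod (f z) * (real_of_int (\<bar>fst z\<bar> + \<bar>snd z\<bar>) + 2 * real p ^ n)) * l2norm g"
proof -
  have p0: "p > 0" using p prime_gt_0_nat by blast
  define A where "A = {z. f z \<noteq> 0}"
  have fA: "finite A" using f by (simp add: A_def CC_def)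
  have g2: "g \<in> l2 (Gamma_n p n)" and Lg: "mult_op (LSigma p) g \<in> l2 (Gamma_n p n)"
    using g by (auto simp: mult_dom_def mult_op_def)
  define W where "W z = (\<lambda>x. f z * (complex_of_real (LSigma p x - LSigma p (x - lattice_point p n z)) *
      shift_op p \<theta> n z g x))" for z
  have W: "W z \<in> l2 (Gamma_n p n)" "l2norm (W z) \<le> cmod (f z) * (real_of_int (\<bar>fst z\<bar> + \<bar>snd z\<bar>) + 2 * real p ^ n) * l2norm g"
    for z
  proof -
    note c = commutator_term_l2[OF g2, of z]
    show "W z \<in> l2 (Gamma_n p n)"
      unfolding W_def using c(1) by (rule l2_cmult)
    show "l2norm (W z) \<le> cmod (f z) * (real_of_int (\<bar>fst z\<bar> + \<bar>snd z\<bar>) + 2 * real p ^ n) * l2norm g"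
      unfolding W_def l2norm_cmult mult.assoc by (rule mult_left_mono[OF c(2) norm_ge_zero])
  qed
  have comm: "(\<lambda>x. mult_op (LSigma p) (pi_theta p \<theta> n f g) x - pi_theta p \<theta> n f (mult_op (LSigma p) g) x)
      = (\<lambda>x. \<Sum>z\<in>A. W z x)"
    unfolding pi_theta_commutator_eq_sum[OF f] W_def A_def ..
  have "mult_op (LSigma p) (pi_theta p \<theta> n f g)
      = (\<lambda>x. pi_theta p \<theta> n f (mult_op (LSigma p) g) x + (\<Sum>z\<in>A. W z x))"
    using fun_cong[OF comm] by (auto simp: algebra_simps)
  then have "mult_op (LSigma p) (pi_theta p \<theta> n f g) \<in> l2 (Gamma_n p n)"
    using l2_add[OF pi_theta_l2[OF p0 f Lg] l2_sum[OF fA W(1)]] by simp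
  then show "pi_theta p \<theta> n f g \<in> mult_dom (Gamma_n p n) (LSigma p)"
    using pi_theta_l2[OF p0 f g2] by (simp add: mult_dom_def mult_op_def)
  have "l2norm (\<lambda>x. \<Sum>z\<in>A. W z x) \<le> (\<Sum>z\<in>A. l2norm (W z))"
    by (rule l2norm_sum[OF fA W(1)])
  also have "\<dots> \<le> (\<Sum>z\<in>A. cmod (f z) * (real_of_int (\<bar>fst z\<bar> + \<bar>snd z\<bar>) + 2 * real p ^ n) * l2norm g)"
    by (rule sum_mono[OF W(2)])
  finally show "l2norm (\<lambda>x. mult_op (LSigma p) (pi_theta p \<theta> n f g) x - pi_theta p \<theta> n f (mult_op (LSigma p) g) x)
      \<le> (\<Sum>z\<in>{z. f z \<noteq> 0}. cmod (f z) * (real_of_int (\<bar>fst z\<bar> + \<bar>snd z\<bar>) + 2 * real p ^ n)) * l2norm g"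
    unfolding comm by (simp add: sum_distrib_right A_def)
qed

end

theorem proposition3p19:
  fixes p n :: nat and \<theta> :: "nat \<Rightarrow> real"
  assumes "prime p" and "\<theta> \<in> Omega p"
  shows "spectral_triple_tw (sigma_Z2 (\<theta> (2 * n))) (Gamma_n p n) (pi_theta p \<theta> n)
           (mult_dom (Gamma_n p n) (LSigma p)) (mult_op (LSigma p))"
proof -
  \<comment> \<open>Only \<open>\<theta> (2 * n)\<close> enters the construction.\<close>
  have p0: "p > 0" using assms(1) prime_gt_0_nat by blast
  have \<pi>: "star_rep (sigma_Z2 (\<theta> (2 * n))) (Gamma_n p n) (pi_theta p \<theta> n)"
    by (rule star_rep_pi_theta[OF p0])
  have norm: "opnorm (Gamma_n p n) (pi_theta p \<theta> n f) = univ_norm (sigma_Z2 (\<theta> (2 * n))) f" if "f \<in> CC" for f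
    using univ_norm_eq_opnorm[OF \<pi> countable_Gamma_n[OF p0] infinite_Gamma_n[OF p0] that]
      opnorm_star_rep_le_pi_theta[OF p0 _ that] by simp
  have dom: "{g \<in> mult_dom (Gamma_n p n) (LSigma p). pi_theta p \<theta> n f g \<in> mult_dom (Gamma_n p n) (LSigma p)}
      = mult_dom (Gamma_n p n) (LSigma p)" if "f \<in> CC" for f
    using pi_theta_commutator_bounded(1)[OF assms(1) that] by blast
  have commutator: "\<exists>C. \<forall>g\<in>mult_dom (Gamma_n p n) (LSigma p).
      l2norm (\<lambda>x. mult_op (LSigma p) (pi_theta p \<theta> n f g) x - pi_theta p \<theta> n f (mult_op (LSigma p) g) x)
        \<le> C * l2norm g" if "f \<in> CC" for f
    using pi_theta_commutator_bounded(2)[OF assms(1) that] by blast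
  show ?thesis
    unfolding spectral_triple_tw_def
    using \<pi> norm dom commutator mult_dom_dense[of "Gamma_n p n" "LSigma p"] selfadjoint_mult_op
      compact_resolvent_mult_op[OF LSigma_sublevel_finite[OF p0]]
    by (simp add: Ball_def)
qed

end
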